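(* Let $\mathrm{st}(x_1,\dots,x_n)$ be the monoid of $K$-algebra endomorphisms $g$ of $\mathbb{S}_n$ with $g(x_i)=x_i$ for all $i$. Then $\mathrm{st}(x_1,\dots,x_n)$ is an abelian monoid, each non-identity element of it is an injective endomorphism of $\mathbb{S}_n$ that is not an automorphism, and it consists precisely of the endomorphisms $\sigma_p$ given by $\sigma_p(x_i)=x_i$, $\sigma_p(y_i)=y_i+p_i(1-x_iy_i)$ ($i=1,\dots,n$), where $p=(p_1,\dots,p_n)\in K[x_1,\dots,x_n]^n$ ranges over the $n$-tuples satisfying, for every pair $i\ne j$, $$-x_j^{-1}(p_i-p_{i,j})+x_i^{-1}(p_j-p_{j,i})+p_ip_{j,i}-p_jp_{i,j}=0,\qquad p_{i,j}:=p_i|_{x_j=0}$$ (here $x_j^{-1}(p_i-p_{i,j})$ denotes the polynomial quotient).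
   Context: $K$ is a field of characteristic zero. $\mathbb{S}_n$ is the $K$-algebra generated by $x_1,\dots,x_n,y_1,\dots,y_n$ with defining relations $y_ix_i=1$ and $[x_i,y_j]=[x_i,x_j]=[y_i,y_j]=0$ for $i\ne j$; $K[x_1,\dots,x_n]$ is the subalgebra generated by the $x_i$ (a polynomial algebra). *)

theory Defs
  imports "HOL-Library.Poly_Mapping"
begin

text \<open>Generators: letter (i, True) stands for x_i, letter (i, False) for y_i,
  where i ranges over the finite index type 'n (so n = CARD('n)).
  S_n is the monoid algebra over K of the monoid presented by the same generators
  and relations; this is exactly the K-algebra presented by these generators and
  (monomial) relations.\<close>

inductive scong :: "('n \<times> bool) list \<Rightarrow> ('n \<times> bool) list \<Rightarrow> bool" where
  yx: "scong [(i, False), (i, True)] []"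
| xy: "i \<noteq> j \<Longrightarrow> scong [(i, True), (j, False)] [(j, False), (i, True)]"
| xx: "i \<noteq> j \<Longrightarrow> scong [(i, True), (j, True)] [(j, True), (i, True)]"
| yy: "i \<noteq> j \<Longrightarrow> scong [(i, False), (j, False)] [(j, False), (i, False)]"
| refl: "scong u u"
| sym: "scong u v \<Longrightarrow> scong v u"
| trans: "scong u v \<Longrightarrow> scong v w \<Longrightarrow> scong u w"
| ctx: "scong u v \<Longrightarrow> scong (a @ u @ b) (a @ v @ b)"

lemma scong_equivp: "equivp scong"
  by (rule equivpI; auto simp: reflp_def symp_def transp_def intro: scong.intros)

quotient_type 'n smon = "('n \<times> bool) list" / scong
  by (rule scong_equivp)

lemma scong_append:
  assumes "scong u u'" "scong v v'" shows "scong (u @ v) (u' @ v')"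
proof -
  have "scong ([] @ u @ v) ([] @ u' @ v)" by (rule scong.ctx[OF assms(1)])
  moreover have "scong (u' @ v @ []) (u' @ v' @ [])" by (rule scong.ctx[OF assms(2)])
  ultimately show ?thesis by (auto intro: scong.trans)
qed

instantiation smon :: (type) monoid_add
begin
lift_definition zero_smon :: "'a smon" is "[]" .
lift_definition plus_smon :: "'a smon \<Rightarrow> 'a smon \<Rightarrow> 'a smon" is "(@)"
  by (rule scong_append)
instance by standard (transfer, simp add: scong.refl)+
end

text \<open>The algebra S_n with coefficients in K (written additively on monomials,
  but the monoid is noncommutative; multiplication is convolution).\<close>
type_synonym ('n, 'k) S = "'n smon \<Rightarrow>\<^sub>0 'k"

lift_definition letter :: "'n \<times> bool \<Rightarrow> 'n smon" is "\<lambda>a. [a]" .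

definition X :: "'n \<Rightarrow> ('n, 'k::ring_1) S" where
  "X i = Poly_Mapping.single (letter (i, True)) 1"

definition Y :: "'n \<Rightarrow> ('n, 'k::ring_1) S" where
  "Y i = Poly_Mapping.single (letter (i, False)) 1"

definition sscal :: "'k \<Rightarrow> ('n, 'k::ring_1) S \<Rightarrow> ('n, 'k) S" where
  "sscal c a = Poly_Mapping.map (\<lambda>b. c * b) a"

definition alg_endo :: "(('n, 'k::ring_1) S \<Rightarrow> ('n, 'k) S) \<Rightarrow> bool" where
  "alg_endo g \<longleftrightarrow> (\<forall>a b. g (a + b) = g a + g b) \<and> (\<forall>c a. g (sscal c a) = sscal c (g a))
     \<and> (\<forall>a b. g (a * b) = g a * g b) \<and> g 1 = 1"

definition st :: "(('n, 'k::ring_1) S \<Rightarrow> ('n, 'k) S) set" where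
  "st = {g. alg_endo g \<and> (\<forall>i. g (X i) = X i)}"

type_synonym ('n, 'k) P = "('n \<Rightarrow>\<^sub>0 nat) \<Rightarrow>\<^sub>0 'k"

text \<open>A fixed enumeration of the (finite) index type, used only to write x^alpha as a word;
  the order is irrelevant since the x_i commute in S_n.\<close>
definition idx_list :: "'n::finite list" where
  "idx_list = (SOME xs. set xs = UNIV \<and> distinct xs)"

definition xword :: "('n::finite \<Rightarrow>\<^sub>0 nat) \<Rightarrow> 'n smon" where
  "xword \<alpha> = abs_smon (concat (map (\<lambda>i. replicate (Poly_Mapping.lookup \<alpha> i) (i, True)) idx_list))"

definition emb :: "('n::finite, 'k::ring_1) P \<Rightarrow> ('n, 'k) S" where
  "emb p = (\<Sum>\<alpha>\<in>Poly_Mapping.keys p. Poly_Mapping.single (xword \<alpha>) (Poly_Mapping.lookup p \<alpha>))"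

lift_definition subst0 :: "'n \<Rightarrow> ('n, 'k::zero) P \<Rightarrow> ('n, 'k) P" is
  "\<lambda>j f \<alpha>. if Poly_Mapping.lookup \<alpha> j = 0 then f \<alpha> else 0"
  by (erule finite_subset[rotated]) auto

text \<open>Exact division by x_j of a polynomial all of whose monomials contain x_j:
  the coefficient of x^alpha in the quotient is that of x^alpha x_j in the dividend.\<close>
lift_definition divx :: "'n \<Rightarrow> ('n, 'k::zero) P \<Rightarrow> ('n, 'k) P" is
  "\<lambda>j f \<alpha>. f (\<alpha> + Poly_Mapping.single j 1)"
proof -
  fix j :: 'n and f :: "('n \<Rightarrow>\<^sub>0 nat) \<Rightarrow> 'k"
  assume "finite {x. f x \<noteq> 0}"
  moreover have "inj (\<lambda>\<alpha>::'n \<Rightarrow>\<^sub>0 nat. \<alpha> + Poly_Mapping.single j 1)"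
    by (auto simp: inj_def)
  ultimately have "finite ((\<lambda>\<alpha>. \<alpha> + Poly_Mapping.single j 1) -` {x. f x \<noteq> 0})"
    by (rule finite_vimageI)
  then show "finite {\<alpha>. f (\<alpha> + Poly_Mapping.single j 1) \<noteq> 0}" by (simp add: vimage_def)
qed

definition st_cond :: "('n \<Rightarrow> ('n, 'k::comm_ring_1) P) \<Rightarrow> bool" where
  "st_cond p \<longleftrightarrow> (\<forall>i j. i \<noteq> j \<longrightarrow>
      - divx j (p i - subst0 j (p i)) + divx i (p j - subst0 i (p j))
      + p i * subst0 i (p j) - p j * subst0 j (p i) = 0)"

definition is_sigma :: "('n::finite \<Rightarrow> ('n, 'k::comm_ring_1) P) \<Rightarrow> (('n, 'k) S \<Rightarrow> ('n, 'k) S) \<Rightarrow> bool" where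
  "is_sigma p g \<longleftrightarrow> (\<forall>i. g (X i) = X i \<and> g (Y i) = Y i + emb (p i) * (1 - X i * Y i))"

end

theory Submission
  imports Defs
begin

text \<open>The monoid underlying \<open>S\<^sub>n\<close> is a product of \<open>n\<close> bicyclic monoids, so every element of
  \<open>S\<^sub>n\<close> has well-defined coefficients at the normal forms \<open>x\<^sup>a y\<^sup>b\<close> (taken componentwise).
  If \<open>g\<close> fixes the \<open>x\<^sub>i\<close>, then \<open>a = g(y\<^sub>i)\<close> satisfies \<open>a x\<^sub>i = 1\<close> and commutes with
  \<open>x\<^sub>j\<close> for \<open>j \<noteq> i\<close>; comparing coefficients forces \<open>a = y\<^sub>i + p\<^sub>i e\<^sub>i\<close> with
  \<open>e\<^sub>i = 1 - x\<^sub>i y\<^sub>i\<close> and \<open>p\<^sub>i \<in> K[x]\<close>. Conversely such an assignment extends to an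
  endomorphism iff the images of \<open>y\<^sub>i\<close> and \<open>y\<^sub>j\<close> commute, and their commutator is the
  polynomial of the defining condition times \<open>e\<^sub>i e\<^sub>j\<close>.
  Composition gives \<open>\<sigma>\<^sub>p \<sigma>\<^sub>q (y\<^sub>i) = y\<^sub>i + (p\<^sub>i + q\<^sub>i - q\<^sub>i x\<^sub>i p\<^sub>i) e\<^sub>i\<close>, which is symmetric in
  \<open>p\<close> and \<open>q\<close>. Every nonzero ideal contains a nonzero multiple of the idempotent
  \<open>e\<^sub>1 \<cdots> e\<^sub>n\<close>, which \<open>\<sigma>\<^sub>p\<close> does not annihilate, so \<open>\<sigma>\<^sub>p\<close> is injective. If \<open>\<sigma>\<^sub>p\<close> were
  bijective, its inverse \<open>\<sigma>\<^sub>q\<close> would give \<open>p\<^sub>i + q\<^sub>i = q\<^sub>i x\<^sub>i p\<^sub>i\<close> in \<open>K[x]\<close>, and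
  comparing leading monomials yields \<open>p\<^sub>i = 0\<close>.\<close>

section \<open>Normal forms in the monoid\<close>

text \<open>The pair \<open>(a, b)\<close> stands for \<open>x\<^sup>a y\<^sup>b\<close>; since \<open>y x = 1\<close>, the word \<open>x\<^sup>a y\<^sup>b x\<^sup>c y\<^sup>d\<close>
  reduces to the normal form computed here (the bicyclic monoid).\<close>
definition bicyclic_mult :: "nat \<times> nat \<Rightarrow> nat \<times> nat \<Rightarrow> nat \<times> nat" where
  "bicyclic_mult u v = (if fst v \<le> snd u then (fst u, snd u - fst v + snd v)
     else (fst u + fst v - snd u, snd v))"

lemma bicyclic_mult_assoc: "bicyclic_mult (bicyclic_mult u v) w = bicyclic_mult u (bicyclic_mult v w)"
  by (cases u; cases v; cases w) (auto simp: bicyclic_mult_def)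

lemma bicyclic_mult_0 [simp]: "bicyclic_mult (0, 0) u = u" "bicyclic_mult u (0, 0) = u"
  by (cases u, simp add: bicyclic_mult_def)+

definition letter_nf :: "'n \<times> bool \<Rightarrow> 'n \<Rightarrow> nat \<times> nat" where
  "letter_nf l k = (if k = fst l then (if snd l then (1, 0) else (0, 1)) else (0, 0))"

fun word_nf :: "('n \<times> bool) list \<Rightarrow> 'n \<Rightarrow> nat \<times> nat" where
  "word_nf [] = (\<lambda>_. (0, 0))"
| "word_nf (l # w) = (\<lambda>k. bicyclic_mult (letter_nf l k) (word_nf w k))"

lemma word_nf_append: "word_nf (u @ v) = (\<lambda>k. bicyclic_mult (word_nf u k) (word_nf v k))"
  by (induction u) (auto simp: bicyclic_mult_assoc)

lemma scong_word_nf: "scong u v \<Longrightarrow> word_nf u = word_nf v"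
  by (induction rule: scong.induct)
     (auto simp: fun_eq_iff letter_nf_def bicyclic_mult_def word_nf_append)

definition block :: "('n \<Rightarrow> nat \<times> nat) \<Rightarrow> 'n \<Rightarrow> ('n \<times> bool) list" where
  "block f i = replicate (fst (f i)) (i, True) @ replicate (snd (f i)) (i, False)"

lemma set_distinct_idx_list: "set (idx_list :: 'n::finite list) = UNIV" "distinct (idx_list :: 'n list)"
proof -
  have "\<exists>xs. set xs = (UNIV :: 'n set) \<and> distinct xs" by (rule finite_distinct_list) simp
  then show "set (idx_list :: 'n list) = UNIV" "distinct (idx_list :: 'n list)"
    unfolding idx_list_def by (metis (mono_tags, lifting) someI_ex)+
qed

definition nf_word :: "('n::finite \<Rightarrow> nat \<times> nat) \<Rightarrow> ('n \<times> bool) list" where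
  "nf_word f = concat (map (block f) idx_list)"

lemma word_nf_replicate_x: "word_nf (replicate a (i, True)) = (\<lambda>k. if k = i then (a, 0) else (0, 0))"
  by (induction a) (auto simp: fun_eq_iff letter_nf_def bicyclic_mult_def)

lemma word_nf_replicate_y: "word_nf (replicate b (i, False)) = (\<lambda>k. if k = i then (0, b) else (0, 0))"
  by (induction b) (auto simp: fun_eq_iff letter_nf_def bicyclic_mult_def)

lemma word_nf_block: "word_nf (block f i) = (\<lambda>k. if k = i then f i else (0, 0))"
  by (cases "f i") (auto simp: block_def word_nf_append word_nf_replicate_x word_nf_replicate_y fun_eq_iff bicyclic_mult_def)

lemma word_nf_concat_block:
  "distinct L \<Longrightarrow> word_nf (concat (map (block f) L)) = (\<lambda>k. if k \<in> set L then f k else (0, 0))"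
  by (induction L) (auto simp: word_nf_append word_nf_block fun_eq_iff)

lemma word_nf_nf_word [simp]: "word_nf (nf_word f) = f"
  by (simp add: nf_word_def word_nf_concat_block set_distinct_idx_list)

lemma scong_commute_letters: "i \<noteq> j \<Longrightarrow> scong [(i, t), (j, s)] [(j, s), (i, t)]"
  by (cases t; cases s) (auto intro: scong.intros)

lemma scong_move_right: "\<forall>l\<in>set ws. fst l \<noteq> i \<Longrightarrow> scong ((i, t) # ws) (ws @ [(i, t)])"
proof (induction ws)
  case Nil then show ?case by (simp add: scong.refl)
next
  case (Cons l ws)
  obtain j s where l: "l = (j, s)" by (cases l)
  with Cons have "i \<noteq> j" by auto
  then have "scong ([] @ [(i, t), (j, s)] @ ws) ([] @ [(j, s), (i, t)] @ ws)"
    by (intro scong.ctx scong_commute_letters)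
  moreover have "scong ([(j, s)] @ ((i, t) # ws) @ []) ([(j, s)] @ (ws @ [(i, t)]) @ [])"
    by (rule scong.ctx) (use Cons in auto)
  ultimately show ?case using l by (auto intro: scong.trans)
qed

lemma scong_cons_block:
  "scong ((i, t) # block f i) (block (f(i := bicyclic_mult (letter_nf (i, t) i) (f i))) i)"
proof -
  obtain a b where fi: "f i = (a, b)" by (cases "f i")
  show ?thesis
  proof (cases "t \<or> a = 0")
    case True then show ?thesis
      using fi by (auto simp: block_def letter_nf_def bicyclic_mult_def intro: scong.refl)
  next
    case False
    then obtain a' where "\<not> t" "a = Suc a'" by (cases a) auto
    moreover have "scong ([] @ [(i, False), (i, True)] @ (replicate a' (i, True) @ replicate b (i, False)))
       ([] @ [] @ (replicate a' (i, True) @ replicate b (i, False)))"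
      by (intro scong.ctx scong.yx)
    ultimately show ?thesis using fi by (auto simp: block_def letter_nf_def bicyclic_mult_def)
  qed
qed

lemma scong_cons_concat_block:
  assumes "distinct L" "i \<in> set L"
  shows "scong ((i, t) # concat (map (block f) L))
    (concat (map (block (f(i := bicyclic_mult (letter_nf (i, t) i) (f i)))) L))"
  using assms
proof (induction L)
  case Nil then show ?case by simp
next
  case (Cons j L)
  let ?f' = "f(i := bicyclic_mult (letter_nf (i, t) i) (f i))"
  show ?case
  proof (cases "j = i")
    case True
    with Cons have "i \<notin> set L" by auto
    then have "concat (map (block ?f') L) = concat (map (block f) L)"
      by (intro arg_cong[where f = concat] map_cong) (auto simp: block_def)
    moreover have "scong ([] @ ((i, t) # block f i) @ concat (map (block f) L))
        ([] @ block ?f' i @ concat (map (block f) L))"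
      by (intro scong.ctx scong_cons_block)
    ultimately show ?thesis
      using True by (simp only: list.map concat.simps append_Cons append_Nil)
  next
    case False
    with Cons have i: "i \<in> set L" "distinct L" by auto
    have "scong ([] @ ((i, t) # block f j) @ concat (map (block f) L))
        ([] @ (block f j @ [(i, t)]) @ concat (map (block f) L))"
      by (intro scong.ctx scong_move_right) (use False in \<open>auto simp: block_def\<close>)
    moreover have "scong (block f j @ ((i, t) # concat (map (block f) L)) @ [])
        (block f j @ concat (map (block ?f') L) @ [])"
      by (intro scong.ctx Cons.IH[OF i(2) i(1)])
    moreover have "block ?f' j = block f j" using False by (simp add: block_def)
    ultimately show ?thesis
      by (simp only: list.map concat.simps append_Cons append_Nil append_Nil2) (auto intro: scong.trans)
  qed
qed

lemma scong_nf_word: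
  fixes w :: "('n::finite \<times> bool) list"
  shows "scong w (nf_word (word_nf w))"
proof (induction w)
  case Nil
  have "nf_word (\<lambda>_. (0, 0) :: nat \<times> nat) = ([] :: ('n \<times> bool) list)"
    by (simp add: nf_word_def block_def)
  then show ?case by (simp add: scong.refl)
next
  case (Cons l w)
  obtain i t where l: "l = (i, t)" by (cases l)
  have "scong ([l] @ w @ []) ([l] @ nf_word (word_nf w) @ [])" by (rule scong.ctx[OF Cons.IH])
  moreover have "scong ((i, t) # nf_word (word_nf w))
      (nf_word ((word_nf w)(i := bicyclic_mult (letter_nf (i, t) i) (word_nf w i))))"
    unfolding nf_word_def by (rule scong_cons_concat_block) (simp_all add: set_distinct_idx_list)
  moreover have "(word_nf w)(i := bicyclic_mult (letter_nf (i, t) i) (word_nf w i)) = word_nf (l # w)"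
    by (auto simp: fun_eq_iff letter_nf_def l)
  ultimately show ?case using l by (auto intro: scong.trans)
qed

lift_definition nf :: "'n::finite smon \<Rightarrow> 'n \<Rightarrow> nat \<times> nat" is word_nf
  by (rule scong_word_nf)

definition mon :: "('n::finite \<Rightarrow> nat \<times> nat) \<Rightarrow> 'n smon" where
  "mon f = abs_smon (nf_word f)"

lemma nf_mon [simp]: "nf (mon f) = f"
  by (simp add: mon_def nf.abs_eq)

lemma mon_nf [simp]: "mon (nf m) = m"
proof -
  obtain w where m: "m = abs_smon w" by (metis Quotient3_abs_rep[OF Quotient3_smon])
  have "scong (nf_word (word_nf w)) w" by (rule scong.sym[OF scong_nf_word])
  then show ?thesis by (simp add: mon_def m nf.abs_eq smon.abs_eq_iff)
qed

lemma nf_inject: "nf m = nf m' \<longleftrightarrow> m = m'"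
  by (metis mon_nf)

lemma mon_inject: "mon f = mon g \<longleftrightarrow> f = g"
  by (metis nf_mon)

lemma eq_mon_iff: "m = mon v \<longleftrightarrow> nf m = v"
  by (metis mon_nf nf_mon)

lemma nf_plus: "nf (m + m') = (\<lambda>k. bicyclic_mult (nf m k) (nf m' k))"
  by transfer (simp add: word_nf_append)

lemma nf_zero: "nf 0 = (\<lambda>_. (0, 0))"
  by transfer simp

lemma nf_letter: "nf (letter l) = letter_nf l"
  by transfer (simp add: fun_eq_iff)


lemma poly_mapping_sum_single:
  "p = (\<Sum>\<alpha>\<in>Poly_Mapping.keys p. Poly_Mapping.single \<alpha> (Poly_Mapping.lookup p \<alpha>))"
  by (rule poly_mapping_eqI)
     (auto simp: lookup_sum lookup_single when_def in_keys_iff sum.delta[OF finite_keys] cong: if_cong)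

lemma poly_mapping_induct [case_names zero single add]:
  assumes "P 0" "\<And>a c. P (Poly_Mapping.single a c)" "\<And>f g. P f \<Longrightarrow> P g \<Longrightarrow> P (f + g)"
  shows "P (p :: 'a \<Rightarrow>\<^sub>0 'b::comm_monoid_add)"
proof -
  have "finite A \<Longrightarrow> P (\<Sum>\<alpha>\<in>A. Poly_Mapping.single \<alpha> (Poly_Mapping.lookup p \<alpha>))" for A
    by (induction A rule: finite_induct) (auto intro: assms)
  then show ?thesis by (subst poly_mapping_sum_single) simp
qed

lemma lookup_mult_single_right:
  "Poly_Mapping.lookup (f * Poly_Mapping.single u c) w
     = (\<Sum>m. Poly_Mapping.lookup f m * c when m + u = w)"
proof -
  have "(\<Sum>q. (c when u = q) when w = l + q) = (\<Sum>q. (c when l + u = w) when q = u)" for l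
    by (intro Sum_any.cong) (auto simp: when_def)
  then show ?thesis by (simp add: lookup_mult lookup_single mult_when)
qed

lemma lookup_mult_single_left:
  "Poly_Mapping.lookup (Poly_Mapping.single u c * f) w
     = (\<Sum>m. c * Poly_Mapping.lookup f m when u + m = w)"
proof -
  have fin: "finite {q. (Poly_Mapping.lookup f q when w = u + q) \<noteq> 0}"
    by (rule finite_subset[of _ "Poly_Mapping.keys f"]) (auto simp: in_keys_iff)
  have "Poly_Mapping.lookup (Poly_Mapping.single u c * f) w
    = (\<Sum>l. (c * (\<Sum>q. Poly_Mapping.lookup f q when w = l + q)) when l = u)"
    unfolding lookup_mult lookup_single by (intro Sum_any.cong) (auto simp: when_def)
  also have "\<dots> = (\<Sum>q. c * (Poly_Mapping.lookup f q when w = u + q))"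
    by (simp add: Sum_any_right_distrib[OF fin])
  also have "\<dots> = (\<Sum>m. c * Poly_Mapping.lookup f m when u + m = w)"
    by (intro Sum_any.cong) (auto simp: when_def)
  finally show ?thesis .
qed

lemma Sum_any_eq_single: "(\<And>m. m \<noteq> m0 \<Longrightarrow> g m = 0) \<Longrightarrow> Sum_any g = g m0"
  by (subst Sum_any.expand_superset[of "{m0}"]) auto

lemma Sum_any_eq_two:
  "m1 \<noteq> m2 \<Longrightarrow> (\<And>m. m \<noteq> m1 \<Longrightarrow> m \<noteq> m2 \<Longrightarrow> g m = 0) \<Longrightarrow> Sum_any g = g m1 + g m2"
  by (subst Sum_any.expand_superset[of "{m1, m2}"]) auto

lemma single_zero_mult_commute:
  "Poly_Mapping.single 0 c * z = z * Poly_Mapping.single 0 (c :: 'k::comm_semiring_1)"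
  by (induction z rule: poly_mapping_induct) (simp_all add: mult_single mult.commute algebra_simps)

lemma sscal_eq_mult: "sscal c a = Poly_Mapping.single 0 c * a"
  unfolding sscal_def by (rule mult_map_scale_conv_mult)

definition map_monomials :: "('a \<Rightarrow> 'b) \<Rightarrow> ('a \<Rightarrow>\<^sub>0 'k::comm_monoid_add) \<Rightarrow> ('b \<Rightarrow>\<^sub>0 'k)" where
  "map_monomials h p
     = (\<Sum>\<alpha>\<in>Poly_Mapping.keys p. Poly_Mapping.single (h \<alpha>) (Poly_Mapping.lookup p \<alpha>))"

lemma lookup_map_monomials:
  assumes "inj h"
  shows "Poly_Mapping.lookup (map_monomials h p) b
    = (if b \<in> range h then Poly_Mapping.lookup p (inv h b) else 0)"
proof (cases "b \<in> range h")
  case True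
  then obtain a where b: "b = h a" by auto
  have "Poly_Mapping.lookup (map_monomials h p) b
      = (\<Sum>\<alpha>\<in>Poly_Mapping.keys p. if \<alpha> = a then Poly_Mapping.lookup p \<alpha> else 0)"
    unfolding map_monomials_def lookup_sum using assms
    by (intro sum.cong) (auto simp: lookup_single when_def b inj_eq)
  also have "\<dots> = Poly_Mapping.lookup p a" by (simp add: sum.delta in_keys_iff)
  finally show ?thesis using assms by (simp add: b)
next
  case False
  then show ?thesis unfolding map_monomials_def lookup_sum
    by (auto simp: lookup_single when_def intro!: sum.neutral)
qed

lemma lookup_map_monomials_image [simp]:
  "inj h \<Longrightarrow> Poly_Mapping.lookup (map_monomials h p) (h a) = Poly_Mapping.lookup p a"
  by (simp add: lookup_map_monomials)

lemma lookup_map_monomials_not_range: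
  "inj h \<Longrightarrow> b \<notin> range h \<Longrightarrow> Poly_Mapping.lookup (map_monomials h p) b = 0"
  by (simp add: lookup_map_monomials)

lemma map_monomials_eqI:
  assumes "inj h" "\<And>a. Poly_Mapping.lookup f (h a) = Poly_Mapping.lookup p a"
    "\<And>b. b \<notin> range h \<Longrightarrow> Poly_Mapping.lookup f b = 0"
  shows "map_monomials h p = f"
  by (rule poly_mapping_eqI) (metis assms lookup_map_monomials_image lookup_map_monomials_not_range rangeE)

lemma map_monomials_zero [simp]: "map_monomials h 0 = 0"
  by (simp add: map_monomials_def)

lemma map_monomials_add:
  "inj h \<Longrightarrow> map_monomials h (p + q) = map_monomials h p + map_monomials h (q :: _ \<Rightarrow>\<^sub>0 'k::comm_monoid_add)"
  by (rule map_monomials_eqI) (auto simp: lookup_add lookup_map_monomials_not_range)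

lemma map_monomials_diff:
  "inj h \<Longrightarrow> map_monomials h (p - q) = map_monomials h p - map_monomials h (q :: _ \<Rightarrow>\<^sub>0 'k::ab_group_add)"
  by (rule map_monomials_eqI) (auto simp: lookup_minus lookup_map_monomials_not_range)

lemma map_monomials_uminus:
  "inj h \<Longrightarrow> map_monomials h (- p) = - map_monomials h (p :: _ \<Rightarrow>\<^sub>0 'k::ab_group_add)"
  by (rule map_monomials_eqI) (auto simp: lookup_map_monomials_not_range)

lemma map_monomials_single:
  "inj h \<Longrightarrow> map_monomials h (Poly_Mapping.single a c) = Poly_Mapping.single (h a) c"
  by (rule map_monomials_eqI) (auto simp: lookup_single when_def inj_eq)

lemma map_monomials_mult:
  fixes h :: "'a::monoid_add \<Rightarrow> 'b::monoid_add"
  assumes "inj h" "\<And>a b. h (a + b) = h a + h b"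
  shows "map_monomials h (p * q) = map_monomials h p * map_monomials h (q :: _ \<Rightarrow>\<^sub>0 'k::ring)"
proof (induction p arbitrary: q rule: poly_mapping_induct)
  case (single a c)
  show ?case
    by (induction q rule: poly_mapping_induct)
       (use assms in \<open>simp_all add: mult_single map_monomials_single distrib_left map_monomials_add\<close>)
qed (use assms in \<open>simp_all add: distrib_right map_monomials_add\<close>)


section \<open>The embedding of \<open>K[x]\<close> into \<open>S\<^sub>n\<close>\<close>

lemma nf_xword: "nf (xword \<alpha>) = (\<lambda>k. (Poly_Mapping.lookup \<alpha> k, 0))"
proof -
  have "xword \<alpha> = mon (\<lambda>k. (Poly_Mapping.lookup \<alpha> k, 0))"
    unfolding xword_def mon_def nf_word_def block_def by simp
  then show ?thesis by simp
qed

lemmas nf_simps = nf_plus nf_letter nf_zero nf_xword letter_nf_def bicyclic_mult_def fun_eq_iff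

lemma xword_add: "xword (\<alpha> + \<beta>) = xword \<alpha> + xword \<beta>"
  by (simp add: nf_inject[symmetric] nf_simps lookup_add)

lemma inj_xword: "inj xword"
  by (rule injI) (auto simp: nf_inject[symmetric] nf_xword fun_eq_iff intro: poly_mapping_eqI)

lemma xword_single: "xword (Poly_Mapping.single i 1) = letter (i, True)"
  by (simp add: nf_inject[symmetric] nf_simps lookup_single when_def)

lemma xword_eq_letter_plus:
  assumes "Poly_Mapping.lookup \<alpha> i \<noteq> 0"
  shows "xword \<alpha> = letter (i, True) + xword (\<alpha> - Poly_Mapping.single i 1)"
  using assms by (simp add: nf_inject[symmetric] nf_simps lookup_minus lookup_single when_def)

lemma emb_eq_map_monomials: "emb = map_monomials xword"
  by (simp add: fun_eq_iff emb_def map_monomials_def)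

lemma emb_add: "emb (p + q) = emb p + emb q"
  by (simp add: emb_eq_map_monomials map_monomials_add inj_xword)

lemma emb_diff: "emb (p - q) = emb p - emb q"
  by (simp add: emb_eq_map_monomials map_monomials_diff inj_xword)

lemma emb_uminus: "emb (- p) = - emb p"
  by (simp add: emb_eq_map_monomials map_monomials_uminus inj_xword)

lemma emb_zero [simp]: "emb 0 = 0"
  by (simp add: emb_eq_map_monomials)

lemma emb_mult: "emb (p * q) = emb p * emb (q :: ('n::finite, 'k::comm_ring_1) P)"
  by (simp add: emb_eq_map_monomials map_monomials_mult inj_xword xword_add)

lemma emb_single: "emb (Poly_Mapping.single \<alpha> c) = Poly_Mapping.single (xword \<alpha>) c"
  by (simp add: emb_eq_map_monomials map_monomials_single inj_xword)

lemmas emb_simps = emb_add emb_diff emb_uminus emb_mult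

abbreviation var :: "'n \<Rightarrow> ('n, 'k::comm_ring_1) P" where
  "var i \<equiv> Poly_Mapping.single (Poly_Mapping.single i 1) 1"

lemma emb_var: "emb (var i) = (X i :: ('n::finite, 'k::comm_ring_1) S)"
  by (simp only: emb_single xword_single X_def)

lemma emb_mult_commute: "emb p * emb q = emb q * emb (p :: ('n::finite, 'k::comm_ring_1) P)"
  by (metis emb_mult mult.commute)

lemma emb_X_commute: "emb p * X i = X i * emb (p :: ('n::finite, 'k::comm_ring_1) P)"
  by (metis emb_mult_commute emb_var)

lemma lookup_emb_xword [simp]: "Poly_Mapping.lookup (emb p) (xword \<alpha>) = Poly_Mapping.lookup p \<alpha>"
  by (simp add: emb_eq_map_monomials inj_xword)

lemma Y_mult_X: "Y i * X i = (1 :: ('n::finite, 'k::comm_ring_1) S)"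
proof -
  have "letter (i, False) + letter (i, True) = (0 :: 'n smon)"
    by (simp add: nf_inject[symmetric] nf_simps)
  then show ?thesis by (simp add: X_def Y_def mult_single)
qed

lemma X_Y_commute: "i \<noteq> j \<Longrightarrow> X i * Y j = Y j * (X i :: ('n::finite, 'k::comm_ring_1) S)"
proof -
  assume "i \<noteq> j"
  then have "letter (i, True) + letter (j, False) = (letter (j, False) + letter (i, True) :: 'n smon)"
    by (auto simp: nf_inject[symmetric] nf_simps)
  then show ?thesis by (simp add: X_def Y_def mult_single)
qed

lemma X_X_commute: "X i * X j = X j * (X i :: ('n::finite, 'k::comm_ring_1) S)"
proof -
  have "letter (i, True) + letter (j, True) = (letter (j, True) + letter (i, True) :: 'n smon)"
    by (auto simp: nf_inject[symmetric] nf_simps)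
  then show ?thesis by (simp add: X_def mult_single)
qed

lemma Y_Y_commute: "Y i * Y j = Y j * (Y i :: ('n::finite, 'k::comm_ring_1) S)"
proof -
  have "letter (i, False) + letter (j, False) = (letter (j, False) + letter (i, False) :: 'n smon)"
    by (auto simp: nf_inject[symmetric] nf_simps)
  then show ?thesis by (simp add: Y_def mult_single)
qed

definition E :: "'n \<Rightarrow> ('n::finite, 'k::comm_ring_1) S" where
  "E i = 1 - X i * Y i"

lemma E_mult_X: "E i * X i = 0"
  by (simp add: E_def algebra_simps mult.assoc Y_mult_X)

lemma Y_mult_E: "Y i * E i = 0"
  by (simp add: E_def algebra_simps Y_mult_X flip: mult.assoc)

lemma E_idem: "E i * E i = E i"
  by (simp add: E_def algebra_simps) (metis Y_mult_X mult.assoc mult_1_left)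

lemma E_X_commute:
  assumes "i \<noteq> j" shows "E i * X j = X j * (E i :: ('n::finite, 'k::comm_ring_1) S)"
proof -
  have "X i * Y i * X j = X i * (X j * Y i :: ('n, 'k) S)"
    using X_Y_commute[OF not_sym[OF assms], where 'k = 'k] by (simp only: mult.assoc)
  also have "\<dots> = X j * (X i * Y i)" by (simp add: X_X_commute flip: mult.assoc)
  finally show ?thesis by (simp add: E_def algebra_simps)
qed

lemma E_Y_commute:
  assumes "i \<noteq> j" shows "E i * Y j = Y j * (E i :: ('n::finite, 'k::comm_ring_1) S)"
proof -
  have "X i * Y i * Y j = X i * Y j * (Y i :: ('n, 'k) S)"
    using Y_Y_commute[of i j, where 'k = 'k] by (simp only: mult.assoc)
  also have "\<dots> = Y j * (X i * Y i)" using X_Y_commute[OF assms, where 'k = 'k] by (simp only: mult.assoc)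
  finally show ?thesis by (simp add: E_def algebra_simps)
qed

lemma E_E_commute: "E i * E j = E j * (E i :: ('n::finite, 'k::comm_ring_1) S)"
proof (cases "i = j")
  case False
  have "E i * (X j * Y j) = X j * Y j * (E i :: ('n, 'k) S)"
    using E_X_commute[OF False, where 'k = 'k] E_Y_commute[OF False, where 'k = 'k]
    by (metis mult.assoc)
  then show ?thesis by (simp add: E_def[of j] algebra_simps)
qed simp


section \<open>Substituting and dividing out a variable\<close>

abbreviation xquot :: "'n \<Rightarrow> ('n, 'k::comm_ring_1) P \<Rightarrow> ('n, 'k) P" where
  "xquot i p \<equiv> divx i (p - subst0 i p)"

lemma lookup_subst0:
  "Poly_Mapping.lookup (subst0 j f) \<alpha>
     = (if Poly_Mapping.lookup \<alpha> j = 0 then Poly_Mapping.lookup f \<alpha> else 0)"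
  by (simp add: subst0.rep_eq)

lemma lookup_divx:
  "Poly_Mapping.lookup (divx j f) \<alpha> = Poly_Mapping.lookup f (\<alpha> + Poly_Mapping.single j 1)"
  by (simp add: divx.rep_eq)

lemma subst0_add: "subst0 j (f + g) = subst0 j f + subst0 j g"
  by (rule poly_mapping_eqI) (simp add: lookup_subst0 lookup_add)

lemma divx_add: "divx j (f + g) = divx j f + divx j g"
  by (rule poly_mapping_eqI) (simp add: lookup_divx lookup_add)

lemma subst0_zero [simp]: "subst0 j 0 = 0"
  by (rule poly_mapping_eqI) (simp add: lookup_subst0)

lemma divx_zero [simp]: "divx j 0 = 0"
  by (rule poly_mapping_eqI) (simp add: lookup_divx)

lemma xquot_add: "xquot i (f + g) = xquot i f + xquot i (g :: ('n, 'k::comm_ring_1) P)"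
proof -
  have "f + g - subst0 i (f + g) = (f - subst0 i f) + (g - subst0 i g)"
    by (simp add: subst0_add algebra_simps)
  then show ?thesis by (simp only: divx_add)
qed

lemma subst0_single:
  "subst0 j (Poly_Mapping.single \<alpha> c)
     = (if Poly_Mapping.lookup \<alpha> j = 0 then Poly_Mapping.single \<alpha> c else 0)"
  by (rule poly_mapping_eqI) (auto simp: lookup_subst0 lookup_single when_def)

lemma divx_single:
  assumes "Poly_Mapping.lookup \<alpha> j \<noteq> 0"
  shows "divx j (Poly_Mapping.single \<alpha> c) = Poly_Mapping.single (\<alpha> - Poly_Mapping.single j 1) c"
proof (rule poly_mapping_eqI)
  fix \<beta>
  have "\<alpha> = \<beta> + Poly_Mapping.single j 1 \<longleftrightarrow> \<alpha> - Poly_Mapping.single j 1 = \<beta>"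
    using assms by (auto simp: poly_mapping_eq_iff fun_eq_iff lookup_add lookup_minus lookup_single when_def)
  then show "Poly_Mapping.lookup (divx j (Poly_Mapping.single \<alpha> c)) \<beta>
      = Poly_Mapping.lookup (Poly_Mapping.single (\<alpha> - Poly_Mapping.single j 1) c) \<beta>"
    by (simp only: lookup_divx lookup_single)
qed

lemma var_mult_xquot: "var i * xquot i p = p - subst0 i (p :: ('n, 'k::comm_ring_1) P)"
proof (induction p rule: poly_mapping_induct)
  case (single a c)
  show ?case
  proof (cases "Poly_Mapping.lookup a i = 0")
    case False
    then have "Poly_Mapping.single i 1 + (a - Poly_Mapping.single i 1) = a"
      by (auto simp: poly_mapping_eq_iff fun_eq_iff lookup_add lookup_minus lookup_single when_def)
    with False show ?thesis by (simp add: subst0_single divx_single mult_single)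
  qed (simp add: subst0_single)
next
  case (add f g)
  then show ?case by (simp only: xquot_add distrib_left) (simp add: subst0_add)
qed simp

lemma X_mult_emb_xquot:
  "X i * emb (xquot i p) = emb p - emb (subst0 i (p :: ('n::finite, 'k::comm_ring_1) P))"
  by (metis emb_var emb_mult var_mult_xquot emb_diff)


lemma Y_mult_emb:
  "Y i * emb p = emb (xquot i p) + emb (subst0 i p) * (Y i :: ('n::finite, 'k::comm_ring_1) S)"
proof (induction p rule: poly_mapping_induct)
  case (single a c)
  show ?case
  proof (cases "Poly_Mapping.lookup a i = 0")
    case True
    then have "letter (i, False) + xword a = xword a + letter (i, False)"
      by (simp add: nf_inject[symmetric] nf_simps)
    with True show ?thesis by (simp add: subst0_single emb_single Y_def mult_single)
  next
    case False
    then have "letter (i, False) + xword a = xword (a - Poly_Mapping.single i 1)"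
      by (simp add: nf_inject[symmetric] nf_simps lookup_minus lookup_single when_def)
    with False show ?thesis by (simp add: subst0_single divx_single emb_single Y_def mult_single)
  qed
next
  case (add f g)
  then show ?case
    by (simp only: xquot_add) (simp add: subst0_add distrib_left distrib_right emb_add algebra_simps)
qed simp

lemma E_mult_emb: "E i * emb p = emb (subst0 i p) * (E i :: ('n::finite, 'k::comm_ring_1) S)"
proof (induction p rule: poly_mapping_induct)
  case (single a c)
  show ?case
  proof (cases "Poly_Mapping.lookup a i = 0")
    case True
    then have "letter (i, True) + letter (i, False) + xword a
        = xword a + (letter (i, True) + letter (i, False))"
      by (simp add: nf_inject[symmetric] nf_simps)
    then have "X i * Y i * Poly_Mapping.single (xword a) c
        = Poly_Mapping.single (xword a) c * (X i * (Y i :: ('n, 'k) S))"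
      by (simp add: X_def Y_def mult_single)
    with True show ?thesis
      by (simp add: subst0_single emb_single E_def left_diff_distrib right_diff_distrib)
  next
    case False
    then have "emb (Poly_Mapping.single a c)
        = X i * Poly_Mapping.single (xword (a - Poly_Mapping.single i 1)) (c :: 'k)"
      by (simp add: emb_single X_def mult_single xword_eq_letter_plus[OF False])
    with False show ?thesis
      by (simp add: E_mult_X subst0_single flip: mult.assoc)
  qed
qed (simp_all add: subst0_add distrib_left distrib_right emb_add)

text \<open>Moving \<open>y\<^sub>i\<close> past \<open>q\<close> leaves the term \<open>(q - q|\<^bsub>x\<^sub>i=0\<^esub>) y\<^sub>i e\<^sub>j = x\<^sub>i (xquot i q) y\<^sub>i e\<^sub>j\<close>,
  and \<open>x\<^sub>i y\<^sub>i = 1 - e\<^sub>i\<close>.\<close>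
lemma Y_commutator_emb_E:
  fixes q :: "('n::finite, 'k::comm_ring_1) P"
  assumes "i \<noteq> j"
  shows "Y i * (emb q * E j) - emb q * E j * Y i = emb (xquot i q) * E i * E j"
proof -
  have "Y i * (emb q * E j) = emb (xquot i q) * E j + emb (subst0 i q) * Y i * E j"
    by (simp only: mult.assoc[symmetric] Y_mult_emb distrib_right)
  moreover have "emb q * E j * Y i = emb q * Y i * E j"
    using E_Y_commute[OF not_sym[OF assms], where 'k = 'k] by (simp add: mult.assoc)
  moreover have "emb q = emb (subst0 i q) + emb (xquot i q) * X i"
    by (simp add: X_mult_emb_xquot emb_X_commute)
  ultimately have "Y i * (emb q * E j) - emb q * E j * Y i
      = emb (xquot i q) * E j - emb (xquot i q) * (X i * Y i) * E j"
    by (simp add: algebra_simps)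
  then show ?thesis by (simp add: E_def[of i] algebra_simps)
qed


lemma alg_endo_add: "alg_endo g \<Longrightarrow> g (a + b) = g a + g b"
  by (simp add: alg_endo_def)

lemma alg_endo_mult: "alg_endo g \<Longrightarrow> g (a * b) = g a * g b"
  by (simp add: alg_endo_def)

lemma alg_endo_one: "alg_endo g \<Longrightarrow> g 1 = 1"
  by (simp add: alg_endo_def)

lemma alg_endo_sscal: "alg_endo g \<Longrightarrow> g (sscal c a) = sscal c (g a)"
  by (simp add: alg_endo_def)

lemma alg_endo_zero: "alg_endo g \<Longrightarrow> g 0 = 0"
  by (metis add_cancel_right_right add_0 alg_endo_add)

lemma alg_endo_diff: "alg_endo g \<Longrightarrow> g (a - b) = g a - g (b :: ('n, 'k::comm_ring_1) S)"
  by (metis alg_endo_add diff_add_cancel eq_diff_eq)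

lemma alg_endo_prod_list: "alg_endo g \<Longrightarrow> g (prod_list xs) = prod_list (map g xs)"
  by (induction xs) (auto simp: alg_endo_one alg_endo_mult)

lemma alg_endo_id: "alg_endo id"
  by (simp add: alg_endo_def)

lemma alg_endo_comp: "alg_endo g \<Longrightarrow> alg_endo h \<Longrightarrow> alg_endo (g \<circ> h)"
  by (simp add: alg_endo_def)

lemma alg_endo_inv:
  assumes "alg_endo g" "bij g"
  shows "alg_endo (inv g)"
proof -
  have gi: "g (inv g y) = y" and ig: "inv g (g x) = x" for x y
    using assms(2) by (simp_all add: bij_is_surj surj_f_inv_f bij_is_inj inv_f_f)
  have "inv g (a + b) = inv g a + inv g b" for a b
    by (metis gi ig alg_endo_add[OF assms(1)])
  moreover have "inv g (sscal c a) = sscal c (inv g a)" for c a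
    by (metis gi ig alg_endo_sscal[OF assms(1)])
  moreover have "inv g (a * b) = inv g a * inv g b" for a b
    by (metis gi ig alg_endo_mult[OF assms(1)])
  moreover have "inv g 1 = 1" by (metis ig alg_endo_one[OF assms(1)])
  ultimately show ?thesis by (simp add: alg_endo_def)
qed

lemma single_abs_smon:
  "Poly_Mapping.single (abs_smon w) (1 :: 'k::comm_ring_1)
     = prod_list (map (\<lambda>l. Poly_Mapping.single (letter l) 1) w)"
proof (induction w)
  case (Cons l w)
  have "abs_smon (l # w) = letter l + abs_smon w"
    by (simp add: letter.abs_eq plus_smon.abs_eq)
  moreover have "Poly_Mapping.single (letter l + abs_smon w) (1 :: 'k)
      = Poly_Mapping.single (letter l) 1 * Poly_Mapping.single (abs_smon w) 1"
    by (simp add: mult_single)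
  ultimately show ?case using Cons by simp
qed (simp add: zero_smon_def[symmetric])

lemma single_letter: "Poly_Mapping.single (letter l) (1 :: 'k::comm_ring_1)
    = (if snd l then X (fst l) else Y (fst l))"
  by (cases l) (simp add: X_def Y_def)

lemma alg_endo_eqI:
  fixes g h :: "('n::finite, 'k::comm_ring_1) S \<Rightarrow> ('n, 'k) S"
  assumes g: "alg_endo g" and h: "alg_endo h"
    and "\<And>i. g (X i) = h (X i)" "\<And>i. g (Y i) = h (Y i)"
  shows "g = h"
proof
  have "g (Poly_Mapping.single (abs_smon w) 1) = h (Poly_Mapping.single (abs_smon w) 1)" for w
    unfolding single_abs_smon alg_endo_prod_list[OF g] alg_endo_prod_list[OF h]
    by (intro arg_cong[where f = prod_list] map_cong) (auto simp: single_letter assms(3,4))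
  then have mon: "g (Poly_Mapping.single m 1) = h (Poly_Mapping.single m 1)" for m
    by (metis Quotient3_abs_rep[OF Quotient3_smon])
  fix f :: "('n, 'k) S"
  show "g f = h f"
  proof (induction f rule: poly_mapping_induct)
    case (single m c)
    have "Poly_Mapping.single m c = sscal c (Poly_Mapping.single m 1)"
      by (simp add: sscal_def)
    then show ?case by (simp add: alg_endo_sscal g h mon)
  qed (simp_all add: alg_endo_zero alg_endo_add g h)
qed

lemma alg_endo_fixes_emb:
  fixes g :: "('n::finite, 'k::comm_ring_1) S \<Rightarrow> ('n, 'k) S"
  assumes g: "alg_endo g" and gX: "\<And>i. g (X i) = X i"
  shows "g (emb p) = emb p"
proof (induction p rule: poly_mapping_induct)
  case (single a c)
  let ?w = "concat (map (\<lambda>i. replicate (Poly_Mapping.lookup a i) (i, True)) idx_list)"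
  have "\<forall>l\<in>set ?w. snd l" by auto
  then have "g (Poly_Mapping.single (xword a) 1) = Poly_Mapping.single (xword a) (1 :: 'k)"
    unfolding xword_def single_abs_smon alg_endo_prod_list[OF g]
    by (intro arg_cong[where f = prod_list]) (auto simp: single_letter gX)
  moreover have "Poly_Mapping.single (xword a) c = sscal c (Poly_Mapping.single (xword a) 1)"
    by (simp add: sscal_def)
  ultimately show ?case by (simp add: emb_single alg_endo_sscal g)
qed (simp_all add: alg_endo_zero alg_endo_add g emb_add)


definition respects_relations :: "('n \<times> bool \<Rightarrow> ('n, 'k::comm_ring_1) S) \<Rightarrow> bool" where
  "respects_relations a \<longleftrightarrow> (\<forall>i. a (i, False) * a (i, True) = 1) \<and>
     (\<forall>i j. i \<noteq> j \<longrightarrow> a (i, True) * a (j, False) = a (j, False) * a (i, True)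
        \<and> a (i, True) * a (j, True) = a (j, True) * a (i, True)
        \<and> a (i, False) * a (j, False) = a (j, False) * a (i, False))"

definition mon_image :: "('n \<times> bool \<Rightarrow> ('n, 'k::comm_ring_1) S) \<Rightarrow> 'n smon \<Rightarrow> ('n, 'k) S" where
  "mon_image a m = prod_list (map a (rep_smon m))"

lemma mon_image_abs_smon:
  assumes "respects_relations a"
  shows "mon_image a (abs_smon w) = prod_list (map a w)"
proof -
  have "prod_list (map a u) = prod_list (map a v)" if "scong u v" for u v
    using that assms by (induction rule: scong.induct) (auto simp: respects_relations_def mult.assoc)
  then show ?thesis
    unfolding mon_image_def by (metis Quotient3_rep_abs[OF Quotient3_smon] scong.refl)
qed

lemma mon_image_plus:
  assumes "respects_relations a"
  shows "mon_image a (m + m') = mon_image a m * mon_image a m'"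
proof -
  obtain w w' where "m = abs_smon w" "m' = abs_smon w'"
    by (metis Quotient3_abs_rep[OF Quotient3_smon])
  with assms show ?thesis by (simp add: plus_smon.abs_eq mon_image_abs_smon)
qed

lemma mon_image_zero: "respects_relations a \<Longrightarrow> mon_image a 0 = 1"
  by (simp add: zero_smon_def mon_image_abs_smon)

definition extend_hom :: "('n \<times> bool \<Rightarrow> ('n, 'k::comm_ring_1) S) \<Rightarrow> ('n, 'k) S \<Rightarrow> ('n, 'k) S" where
  "extend_hom a f
     = (\<Sum>m\<in>Poly_Mapping.keys f. Poly_Mapping.single 0 (Poly_Mapping.lookup f m) * mon_image a m)"

lemma extend_hom_add: "extend_hom a (f + g) = extend_hom a f + extend_hom a g"
proof -
  let ?K = "Poly_Mapping.keys f \<union> Poly_Mapping.keys g"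
  have expand: "extend_hom a h
      = (\<Sum>m\<in>?K. Poly_Mapping.single 0 (Poly_Mapping.lookup h m) * mon_image a m)"
    if "Poly_Mapping.keys h \<subseteq> ?K" for h
    unfolding extend_hom_def using that by (intro sum.mono_neutral_left) (auto simp: in_keys_iff)
  have "Poly_Mapping.keys (f + g) \<subseteq> ?K" by (rule keys_add)
  then show ?thesis
    by (simp add: expand lookup_add single_add distrib_right sum.distrib)
qed

lemma extend_hom_zero [simp]: "extend_hom a 0 = 0"
  by (simp add: extend_hom_def)

lemma extend_hom_single:
  "extend_hom a (Poly_Mapping.single m c) = Poly_Mapping.single 0 c * mon_image a m"
  by (cases "c = 0") (simp_all add: extend_hom_def)

lemma extend_hom_mult:
  assumes a: "respects_relations a"
  shows "extend_hom a (f * g) = extend_hom a f * extend_hom a g"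
proof (induction f arbitrary: g rule: poly_mapping_induct)
  case (single m c)
  show ?case
  proof (induction g rule: poly_mapping_induct)
    case (single m' d)
    have "extend_hom a (Poly_Mapping.single m c * Poly_Mapping.single m' d)
      = Poly_Mapping.single 0 c * Poly_Mapping.single 0 d * (mon_image a m * mon_image a m')"
      by (simp add: mult_single extend_hom_single mon_image_plus[OF a])
    also have "\<dots> = Poly_Mapping.single 0 c * (mon_image a m * Poly_Mapping.single 0 d) * mon_image a m'"
      using single_zero_mult_commute[of d "mon_image a m"] by (metis mult.assoc)
    finally show ?case by (simp add: extend_hom_single mult.assoc)
  qed (simp_all add: distrib_left extend_hom_add)
qed (simp_all add: distrib_right extend_hom_add)

lemma alg_endo_extend_hom: "respects_relations a \<Longrightarrow> alg_endo (extend_hom a)"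
proof -
  assume a: "respects_relations a"
  have "extend_hom a 1 = 1"
    by (metis a extend_hom_single mon_image_zero mult_1_right single_one)
  moreover have "extend_hom a (sscal c f) = sscal c (extend_hom a f)" for c f
    by (simp add: sscal_eq_mult extend_hom_mult[OF a] extend_hom_single mon_image_zero[OF a])
  ultimately show ?thesis by (simp add: alg_endo_def extend_hom_add extend_hom_mult[OF a])
qed

lemma extend_hom_letter: "respects_relations a \<Longrightarrow> extend_hom a (Poly_Mapping.single (letter l) 1) = a l"
  by (simp add: extend_hom_single mon_image_abs_smon letter.abs_eq)


section \<open>The endomorphisms \<open>\<sigma>\<^sub>p\<close>\<close>

definition st_poly :: "('n \<Rightarrow> ('n, 'k::comm_ring_1) P) \<Rightarrow> 'n \<Rightarrow> 'n \<Rightarrow> ('n, 'k) P" where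
  "st_poly p i j = - xquot j (p i) + xquot i (p j) + p i * subst0 i (p j) - p j * subst0 j (p i)"

lemma st_cond_iff_st_poly: "st_cond p \<longleftrightarrow> (\<forall>i j. i \<noteq> j \<longrightarrow> st_poly p i j = 0)"
  by (simp add: st_cond_def st_poly_def)

definition sigma_Y :: "('n \<Rightarrow> ('n, 'k::comm_ring_1) P) \<Rightarrow> 'n::finite \<Rightarrow> ('n, 'k) S" where
  "sigma_Y p i = Y i + emb (p i) * E i"

lemma is_sigma_iff: "is_sigma p g \<longleftrightarrow> (\<forall>i. g (X i) = X i \<and> g (Y i) = sigma_Y p i)"
  by (simp add: is_sigma_def sigma_Y_def E_def)

lemma sigma_Y_commutator:
  fixes p :: "'n::finite \<Rightarrow> ('n, 'k::comm_ring_1) P"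
  assumes "i \<noteq> j"
  shows "sigma_Y p i * sigma_Y p j - sigma_Y p j * sigma_Y p i = emb (st_poly p i j) * E i * E j"
proof -
  have "Y i * Y j = Y j * (Y i :: ('n, 'k) S)" by (rule Y_Y_commute)
  moreover have "Y i * (emb (p j) * E j) - emb (p j) * E j * Y i = emb (xquot i (p j)) * E i * E j"
    by (rule Y_commutator_emb_E[OF assms])
  moreover have "Y j * (emb (p i) * E i) - emb (p i) * E i * Y j = emb (xquot j (p i)) * E i * E j"
    using Y_commutator_emb_E[OF not_sym[OF assms], of "p i"] by (simp add: E_E_commute mult.assoc)
  moreover have "emb (p i) * E i * (emb (p j) * E j) = emb (p i * subst0 i (p j)) * E i * E j"
    by (simp add: emb_mult E_mult_emb mult.assoc flip: mult.assoc[of "E i"])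
  moreover have "emb (p j) * E j * (emb (p i) * E i) = emb (p j * subst0 j (p i)) * E i * E j"
    by (simp add: emb_mult E_mult_emb mult.assoc E_E_commute[of j] flip: mult.assoc[of "E j"])
  moreover have "sigma_Y p i * sigma_Y p j - sigma_Y p j * sigma_Y p i
      = (Y i * Y j - Y j * Y i)
      + (Y i * (emb (p j) * E j) - emb (p j) * E j * Y i)
      - (Y j * (emb (p i) * E i) - emb (p i) * E i * Y j)
      + emb (p i) * E i * (emb (p j) * E j) - emb (p j) * E j * (emb (p i) * E i)"
    by (simp add: sigma_Y_def algebra_simps)
  ultimately show ?thesis
    by (simp add: st_poly_def emb_simps algebra_simps)
qed

lemma X_sigma_Y_commute:
  fixes p :: "'n::finite \<Rightarrow> ('n, 'k::comm_ring_1) P"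
  assumes "i \<noteq> j" shows "X i * sigma_Y p j = sigma_Y p j * X i"
proof -
  have "X i * (emb (p j) * E j) = emb (p j) * (X i * E j)"
    by (simp add: emb_X_commute flip: mult.assoc)
  also have "\<dots> = emb (p j) * E j * X i"
    using E_X_commute[OF not_sym[OF assms], where 'k = 'k] by (simp add: mult.assoc)
  finally have "X i * (emb (p j) * E j) = emb (p j) * E j * X i" .
  then show ?thesis using X_Y_commute[OF assms] by (simp add: sigma_Y_def algebra_simps)
qed

lemma sigma_Y_mult_X: "sigma_Y p i * X i = 1"
  by (simp add: sigma_Y_def distrib_right Y_mult_X mult.assoc E_mult_X)

definition sigma_gen :: "('n \<Rightarrow> ('n, 'k::comm_ring_1) P) \<Rightarrow> 'n::finite \<times> bool \<Rightarrow> ('n, 'k) S" where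
  "sigma_gen p l = (if snd l then X (fst l) else sigma_Y p (fst l))"

lemma respects_relations_sigma_gen:
  fixes p :: "'n::finite \<Rightarrow> ('n, 'k::comm_ring_1) P"
  assumes "st_cond p" shows "respects_relations (sigma_gen p)"
  unfolding respects_relations_def sigma_gen_def
proof (intro conjI allI impI; simp)
  fix i j :: 'n
  assume ij: "i \<noteq> j"
  show "X i * sigma_Y p j = sigma_Y p j * X i" by (rule X_sigma_Y_commute[OF ij])
  show "X i * X j = X j * (X i :: ('n, 'k) S)" by (rule X_X_commute)
  have "sigma_Y p i * sigma_Y p j - sigma_Y p j * sigma_Y p i = 0"
    using assms ij by (simp add: sigma_Y_commutator st_cond_iff_st_poly)
  then show "sigma_Y p i * sigma_Y p j = sigma_Y p j * sigma_Y p i" by simp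
qed (rule sigma_Y_mult_X)

definition sigma :: "('n::finite \<Rightarrow> ('n, 'k::comm_ring_1) P) \<Rightarrow> ('n, 'k) S \<Rightarrow> ('n, 'k) S" where
  "sigma p = extend_hom (sigma_gen p)"

lemma alg_endo_sigma: "st_cond p \<Longrightarrow> alg_endo (sigma p)"
  by (simp add: sigma_def alg_endo_extend_hom respects_relations_sigma_gen)

lemma is_sigma_sigma:
  assumes "st_cond p" shows "is_sigma p (sigma p)"
proof -
  note r = respects_relations_sigma_gen[OF assms]
  have "sigma p (X i) = X i" "sigma p (Y i) = sigma_Y p i" for i
    using extend_hom_letter[OF r, of "(i, True)"] extend_hom_letter[OF r, of "(i, False)"]
    by (simp_all add: sigma_def sigma_gen_def X_def Y_def)
  then show ?thesis by (simp add: is_sigma_iff)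
qed

lemma is_sigma_unique:
  "alg_endo g \<Longrightarrow> is_sigma p g \<Longrightarrow> alg_endo h \<Longrightarrow> is_sigma p h \<Longrightarrow> g = h"
  by (rule alg_endo_eqI) (auto simp: is_sigma_def)

lemma ex1_sigma: "st_cond p \<Longrightarrow> \<exists>!g. alg_endo g \<and> is_sigma p g"
  using alg_endo_sigma is_sigma_sigma is_sigma_unique by blast


section \<open>Coefficients and commutation with the \<open>x\<^sub>j\<close>\<close>

lemma nf_letter_plus: "nf (letter l + m) = (nf m)(fst l := bicyclic_mult (letter_nf l (fst l)) (nf m (fst l)))"
  by (auto simp: nf_plus nf_letter fun_eq_iff letter_nf_def)

lemma nf_plus_letter: "nf (m + letter l) = (nf m)(fst l := bicyclic_mult (nf m (fst l)) (letter_nf l (fst l)))"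
  by (auto simp: nf_plus nf_letter fun_eq_iff letter_nf_def)

lemma fun_upd_eq_iff: "f(j := t) = v \<longleftrightarrow> t = v j \<and> (\<forall>k. k \<noteq> j \<longrightarrow> f k = v k)"
  by (auto simp: fun_eq_iff)

lemma eq_fun_upd_iff: "f = v(j := t) \<longleftrightarrow> f j = t \<and> (\<forall>k. k \<noteq> j \<longrightarrow> f k = v k)"
  by (auto simp: fun_eq_iff)

lemma bicyclic_mult_x_eq_iff:
  "bicyclic_mult (Suc 0, 0) u = w \<longleftrightarrow> 0 < fst w \<and> u = (fst w - 1, snd w)"
  "bicyclic_mult u (Suc 0, 0) = w \<longleftrightarrow> u = (fst w, snd w + 1) \<or> snd w = 0 \<and> 0 < fst w \<and> u = (fst w - 1, 0)"
  by (cases u; cases w; auto simp: bicyclic_mult_def)+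

lemma bicyclic_mult_y_eq_iff:
  "bicyclic_mult u (0, Suc 0) = w \<longleftrightarrow> 0 < snd w \<and> u = (fst w, snd w - 1)"
  by (cases u; cases w) (auto simp: bicyclic_mult_def)

lemmas mon_eq_iff_simps = eq_mon_iff nf_letter_plus nf_plus_letter fun_upd_eq_iff eq_fun_upd_iff
  letter_nf_def bicyclic_mult_x_eq_iff bicyclic_mult_y_eq_iff

lemma letter_x_plus_eq_mon_iff:
  "letter (j, True) + m = mon v
     \<longleftrightarrow> 0 < fst (v j) \<and> m = mon (v(j := (fst (v j) - 1, snd (v j))))"
  by (simp add: mon_eq_iff_simps)

lemma plus_letter_x_eq_mon_iff:
  "m + letter (j, True) = mon v
     \<longleftrightarrow> m = mon (v(j := (fst (v j), snd (v j) + 1)))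
       \<or> snd (v j) = 0 \<and> 0 < fst (v j) \<and> m = mon (v(j := (fst (v j) - 1, 0)))"
  by (simp add: mon_eq_iff_simps) blast

lemma plus_letter_y_eq_mon_iff:
  "m + letter (j, False) = mon v
     \<longleftrightarrow> 0 < snd (v j) \<and> m = mon (v(j := (fst (v j), snd (v j) - 1)))"
  by (simp add: mon_eq_iff_simps)

lemma lookup_X_mult:
  "Poly_Mapping.lookup (X j * f) (mon v)
     = (if 0 < fst (v j) then Poly_Mapping.lookup f (mon (v(j := (fst (v j) - 1, snd (v j))))) else 0)"
  unfolding X_def lookup_mult_single_left letter_x_plus_eq_mon_iff
  by (cases "0 < fst (v j)") (simp_all add: when_def)

lemma lookup_mult_Y:
  "Poly_Mapping.lookup (f * Y j) (mon v)
     = (if 0 < snd (v j) then Poly_Mapping.lookup f (mon (v(j := (fst (v j), snd (v j) - 1)))) else 0)"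
  unfolding Y_def lookup_mult_single_right plus_letter_y_eq_mon_iff
  by (cases "0 < snd (v j)") (simp_all add: when_def)

lemma lookup_mult_X:
  "Poly_Mapping.lookup (f * X j) (mon v)
     = Poly_Mapping.lookup f (mon (v(j := (fst (v j), snd (v j) + 1))))
       + (if snd (v j) = 0 \<and> 0 < fst (v j)
          then Poly_Mapping.lookup f (mon (v(j := (fst (v j) - 1, 0)))) else 0)"
proof -
  let ?m1 = "mon (v(j := (fst (v j), snd (v j) + 1)))"
  let ?m2 = "mon (v(j := (fst (v j) - 1, 0)))"
  have "Poly_Mapping.lookup (f * X j) (mon v) =
     (\<Sum>m. Poly_Mapping.lookup f m when m = ?m1 \<or> (snd (v j) = 0 \<and> 0 < fst (v j) \<and> m = ?m2))"
    unfolding X_def lookup_mult_single_right plus_letter_x_eq_mon_iff by simp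
  also have "\<dots> = Poly_Mapping.lookup f ?m1
      + (if snd (v j) = 0 \<and> 0 < fst (v j) then Poly_Mapping.lookup f ?m2 else 0)"
  proof (cases "snd (v j) = 0 \<and> 0 < fst (v j)")
    case True
    then have "?m1 \<noteq> ?m2" by (simp add: mon_inject fun_eq_iff)
    with True show ?thesis by (subst Sum_any_eq_two) (auto simp: when_def)
  qed (subst Sum_any_eq_single[of ?m1], auto simp: when_def)
  finally show ?thesis .
qed

lemma xword_eq_mon:
  assumes "\<forall>k. snd (v k) = 0" shows "xword (Abs_poly_mapping (fst \<circ> v)) = mon v"
  using assms by (simp add: eq_mon_iff nf_xword fun_eq_iff prod_eq_iff)

lemma lookup_mult_E_xword: "Poly_Mapping.lookup (f * E k) (xword \<alpha>) = Poly_Mapping.lookup f (xword \<alpha>)"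
proof -
  have "xword \<alpha> = mon (\<lambda>k. (Poly_Mapping.lookup \<alpha> k, 0))" by (simp add: eq_mon_iff nf_xword)
  then have "Poly_Mapping.lookup (f * X k * Y k) (xword \<alpha>) = 0" by (simp add: lookup_mult_Y)
  then show ?thesis by (simp add: E_def right_diff_distrib lookup_minus mult.assoc)
qed

lemma emb_mult_E_eq_0: "emb q * E i = 0 \<Longrightarrow> q = 0"
  using lookup_mult_E_xword[of "emb q" i] by (auto intro: poly_mapping_eqI)

lemma emb_mult_E_mult_E_eq_0: "emb q * E i * E j = 0 \<Longrightarrow> q = 0"
  using lookup_mult_E_xword[of "emb q * E i" j] lookup_mult_E_xword[of "emb q" i]
  by (auto intro: poly_mapping_eqI)


text \<open>Compare the coefficients of
  \<open>x\<^sub>j f\<close> and \<open>f x\<^sub>j\<close> at \<open>x\<^sub>j\<^sup>c y\<^sub>j\<^sup>d\<close>, by induction on \<open>d\<close>.\<close>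
lemma lookup_eq_0_if_X_commute:
  assumes comm: "X j * f = f * X j" and "0 < snd (v j)"
  shows "Poly_Mapping.lookup f (mon v) = 0"
proof -
  define F where "F c d = Poly_Mapping.lookup f (mon (v(j := (c, d))))" for c d
  have lookup_comm: "Poly_Mapping.lookup (X j * f) (mon w) = Poly_Mapping.lookup (f * X j) (mon w)" for w
    by (simp only: comm)
  have step: "(if 0 < c then F (c - 1) d else 0)
      = F c (d + 1) + (if d = 0 \<and> 0 < c then F (c - 1) 0 else 0)" for c d
    using lookup_comm[of "v(j := (c, d))"]
    by (simp add: lookup_X_mult lookup_mult_X F_def cong: if_cong)
  have "F c (Suc d) = 0" for c d
  proof (induction d arbitrary: c)
    case 0
    show ?case using step[of c 0] by (simp split: if_splits)
  next
    case (Suc d)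
    show ?case using step[of c "Suc d"] Suc[of "c - 1"] by (simp split: if_splits)
  qed
  then have "F (fst (v j)) (Suc (snd (v j) - 1)) = 0" .
  with assms(2) show ?thesis by (simp add: F_def)
qed

lemma eq_0_if_annihilates_X:
  assumes ann: "f * X i = 0" and comm: "\<And>j. j \<noteq> i \<Longrightarrow> X j * f = f * X j"
    and xfree: "\<And>\<alpha>. Poly_Mapping.lookup f (xword \<alpha>) = 0"
  shows "f = 0"
proof -
  have y_free: "Poly_Mapping.lookup f (mon v) = 0" if "\<forall>k. snd (v k) = 0" for v
    using xfree xword_eq_mon[OF that] by metis
  have "Poly_Mapping.lookup f (mon v) = 0" for v
  proof (cases "\<exists>j. j \<noteq> i \<and> 0 < snd (v j)")
    case True
    then show ?thesis using lookup_eq_0_if_X_commute comm by blast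
  next
    case False
    then have others: "\<And>j. j \<noteq> i \<Longrightarrow> snd (v j) = 0" by auto
    show ?thesis
    proof (cases "snd (v i)")
      case 0
      then have "\<forall>k. snd (v k) = 0" using others by (metis)
      then show ?thesis by (rule y_free)
    next
      case (Suc d)
      let ?w = "v(i := (fst (v i), d))"
      have "?w(i := (fst (?w i), snd (?w i) + 1)) = v" using Suc by (auto simp: fun_eq_iff prod_eq_iff)
      moreover have "Poly_Mapping.lookup f (mon (?w(i := (fst (v i) - 1, 0)))) = 0"
        using others by (intro y_free) auto
      ultimately show ?thesis
        using arg_cong[OF ann, of "\<lambda>f. Poly_Mapping.lookup f (mon ?w)"]
        by (simp add: lookup_mult_X split: if_splits)
    qed
  qed
  then show ?thesis by (intro poly_mapping_eqI) (metis mon_nf lookup_zero)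
qed

lemma image_Y_if_fixes_X:
  fixes a :: "('n::finite, 'k::comm_ring_1) S"
  assumes inv: "a * X i = 1" and comm: "\<And>j. j \<noteq> i \<Longrightarrow> X j * a = a * X j"
  shows "\<exists>q. a = Y i + emb q * E i"
proof -
  define b where "b = a - Y i"
  define q where "q = Abs_poly_mapping (\<lambda>\<alpha>. Poly_Mapping.lookup b (xword \<alpha>))"
  have "finite {\<alpha>. Poly_Mapping.lookup b (xword \<alpha>) \<noteq> 0}"
    using finite_vimageI[OF finite_keys inj_xword, of b] by (simp add: vimage_def in_keys_iff)
  then have q: "Poly_Mapping.lookup q \<alpha> = Poly_Mapping.lookup b (xword \<alpha>)" for \<alpha>
    by (simp add: q_def)
  have "b - emb q * E i = 0"
  proof (rule eq_0_if_annihilates_X)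
    show "(b - emb q * E i) * X i = 0"
      by (simp add: b_def inv Y_mult_X left_diff_distrib mult.assoc E_mult_X)
    fix j assume ji: "j \<noteq> i"
    have "X j * (emb q * E i) = emb q * (X j * E i)"
      by (simp add: emb_X_commute flip: mult.assoc)
    also have "\<dots> = emb q * E i * X j"
      using E_X_commute[OF not_sym[OF ji], where 'k = 'k] by (simp add: mult.assoc)
    finally show "X j * (b - emb q * E i) = (b - emb q * E i) * X j"
      using comm[OF ji] X_Y_commute[OF ji, where 'k = 'k] by (simp add: b_def algebra_simps)
  next
    show "Poly_Mapping.lookup (b - emb q * E i) (xword \<alpha>) = 0" for \<alpha>
      by (simp add: lookup_minus lookup_mult_E_xword q)
  qed
  then have "a = Y i + emb q * E i" by (simp add: b_def algebra_simps)
  then show ?thesis ..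
qed


section \<open>The stabilizer of the \<open>x\<^sub>i\<close>\<close>

lemma st_imp_is_sigma:
  fixes g :: "('n::finite, 'k::comm_ring_1) S \<Rightarrow> ('n, 'k) S"
  assumes "g \<in> st"
  obtains p where "st_cond p" "is_sigma p g"
proof -
  have ae: "alg_endo g" and gX: "\<And>i. g (X i) = X i" using assms by (auto simp: st_def)
  have "\<exists>q. g (Y i) = Y i + emb q * E i" for i
  proof (rule image_Y_if_fixes_X)
    show "g (Y i) * X i = 1"
      using alg_endo_mult[OF ae, of "Y i" "X i"] by (simp add: gX Y_mult_X alg_endo_one[OF ae])
    show "X j * g (Y i) = g (Y i) * X j" if "j \<noteq> i" for j
      using alg_endo_mult[OF ae, of "X j" "Y i"] alg_endo_mult[OF ae, of "Y i" "X j"]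
      by (simp add: gX X_Y_commute[OF that])
  qed
  then obtain p where gY: "\<And>i. g (Y i) = sigma_Y p i"
    unfolding sigma_Y_def by metis
  have "st_poly p i j = 0" if "i \<noteq> j" for i j
  proof -
    have "sigma_Y p i * sigma_Y p j = sigma_Y p j * sigma_Y p i"
      by (simp add: gY[symmetric] alg_endo_mult[OF ae, symmetric] Y_Y_commute)
    then have "emb (st_poly p i j) * E i * E j = 0"
      by (simp add: sigma_Y_commutator[OF that, symmetric])
    then show ?thesis by (rule emb_mult_E_mult_E_eq_0)
  qed
  then have "st_cond p" by (simp add: st_cond_iff_st_poly)
  moreover have "is_sigma p g" by (simp add: is_sigma_iff gX gY)
  ultimately show ?thesis by (rule that)
qed

theorem st_eq_sigmas:
  "(st :: (('n::finite, 'k::comm_ring_1) S \<Rightarrow> ('n, 'k) S) set)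
     = {g. alg_endo g \<and> (\<exists>p. st_cond p \<and> is_sigma p g)}"
proof (intro equalityI subsetI)
  fix g assume g: "g \<in> (st :: (('n, 'k) S \<Rightarrow> ('n, 'k) S) set)"
  then obtain p where "st_cond p" "is_sigma p g" by (rule st_imp_is_sigma)
  with g show "g \<in> {g. alg_endo g \<and> (\<exists>p. st_cond p \<and> is_sigma p g)}"
    by (auto simp: st_def)
qed (auto simp: st_def is_sigma_def)

lemma sigma_comp_Y:
  fixes g h :: "('n::finite, 'k::comm_ring_1) S \<Rightarrow> ('n, 'k) S"
  assumes ag: "alg_endo g" and sg: "is_sigma p g" and sh: "is_sigma q h"
  shows "g (h (Y i)) = sigma_Y (\<lambda>i. p i + q i - q i * var i * p i) i"
proof -
  have gX: "g (X i) = X i" and gY: "g (Y i) = sigma_Y p i" and hY: "h (Y i) = sigma_Y q i"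
    using sg sh by (auto simp: is_sigma_iff)
  have "g (emb (q i)) = emb (q i)"
    by (rule alg_endo_fixes_emb[OF ag]) (use sg in \<open>auto simp: is_sigma_def\<close>)
  moreover have "g (E i) = E i - X i * emb (p i) * E i"
    by (simp add: E_def alg_endo_diff[OF ag] alg_endo_mult[OF ag] alg_endo_one[OF ag] gX gY
        sigma_Y_def algebra_simps)
  ultimately have "g (h (Y i)) = sigma_Y p i + emb (q i) * (E i - X i * emb (p i) * E i)"
    by (simp add: hY sigma_Y_def alg_endo_add[OF ag] alg_endo_mult[OF ag] gY)
  also have "\<dots> = Y i + (emb (p i) + emb (q i) - emb (q i) * X i * emb (p i)) * E i"
    by (simp add: sigma_Y_def algebra_simps)
  also have "\<dots> = sigma_Y (\<lambda>i. p i + q i - q i * var i * p i) i"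
    by (simp only: sigma_Y_def emb_simps emb_var)
  finally show ?thesis .
qed

lemma st_comp: "g \<in> st \<Longrightarrow> h \<in> st \<Longrightarrow> g \<circ> h \<in> st"
  by (auto simp: st_def alg_endo_comp)

lemma st_comp_commute:
  fixes g h :: "('n::finite, 'k::comm_ring_1) S \<Rightarrow> ('n, 'k) S"
  assumes "g \<in> st" "h \<in> st"
  shows "g \<circ> h = h \<circ> g"
proof -
  obtain p q where sg: "is_sigma p g" and sh: "is_sigma q h"
    using assms by (metis st_imp_is_sigma)
  have ag: "alg_endo g" and ah: "alg_endo h" using assms by (auto simp: st_def)
  have "(\<lambda>i. p i + q i - q i * var i * p i) = (\<lambda>i. q i + p i - p i * var i * q i)"
    by (simp add: fun_eq_iff algebra_simps)
  then have "(g \<circ> h) (Y i) = (h \<circ> g) (Y i)" for i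
    by (simp add: sigma_comp_Y[OF ag sg sh] sigma_comp_Y[OF ah sh sg])
  moreover have "(g \<circ> h) (X i) = (h \<circ> g) (X i)" for i
    using sg sh by (simp add: is_sigma_def)
  ultimately show ?thesis by (intro alg_endo_eqI alg_endo_comp ag ah)
qed


section \<open>Injectivity\<close>

definition E_all :: "('n::finite, 'k::comm_ring_1) S" where
  "E_all = prod_list (map E idx_list)"

lemma E_mult_prod_list_commute:
  "E i * prod_list (map E L) = prod_list (map E L) * (E i :: ('n::finite, 'k::comm_ring_1) S)"
proof (induction L)
  case (Cons j L)
  have "E i * (E j * prod_list (map E L)) = E j * (E i * prod_list (map E L) :: ('n, 'k) S)"
    by (simp only: mult.assoc[symmetric] E_E_commute[of i j])
  also have "\<dots> = E j * prod_list (map E L) * E i" by (simp add: Cons.IH mult.assoc)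
  finally show ?case by simp
qed simp

lemma prod_list_E_mult_E:
  "i \<in> set L \<Longrightarrow> prod_list (map E L) * E i = (prod_list (map E L) :: ('n::finite, 'k::comm_ring_1) S)"
proof (induction L)
  case (Cons j L)
  show ?case
  proof (cases "j = i")
    case True
    have "E i * prod_list (map E L) * E i = E i * (E i * prod_list (map E L) :: ('n, 'k) S)"
      by (subst mult.assoc, subst E_mult_prod_list_commute[symmetric]) simp
    with True show ?thesis by (simp add: E_idem flip: mult.assoc)
  next
    case False
    with Cons show ?thesis by (simp add: mult.assoc)
  qed
qed simp

lemma E_all_mult_E: "E_all * E i = E_all"
  unfolding E_all_def by (rule prod_list_E_mult_E) (simp add: set_distinct_idx_list)

lemma E_mult_E_all: "E i * E_all = E_all"
  using E_all_mult_E by (simp add: E_all_def E_mult_prod_list_commute)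

lemma E_all_mult_X: "E_all * X i = 0"
proof -
  have "E_all * X i = E_all * (E i * X i)" by (simp only: E_all_mult_E flip: mult.assoc)
  then show ?thesis by (simp add: E_mult_X)
qed

lemma Y_mult_E_all: "Y i * E_all = 0"
proof -
  have "Y i * E_all = Y i * E i * E_all" by (simp only: E_mult_E_all mult.assoc)
  then show ?thesis by (simp add: Y_mult_E)
qed

lemma E_all_idem: "E_all * E_all = E_all"
proof -
  have "E_all * prod_list (map E L) = E_all" for L
    by (induction L) (simp_all add: E_all_mult_E flip: mult.assoc)
  then show ?thesis by (simp add: E_all_def)
qed

lemma lookup_E_all_zero: "Poly_Mapping.lookup (E_all :: ('n::finite, 'k::comm_ring_1) S) 0 = 1"
proof -
  have zero: "(0 :: 'n smon) = mon (\<lambda>_. (0, 0))" by (simp add: eq_mon_iff nf_zero)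
  have "Poly_Mapping.lookup (prod_list (map E L) :: ('n, 'k) S) 0 = 1" for L
  proof (induction L)
    case (Cons j L)
    have "E j * prod_list (map E L) = prod_list (map E L) - X j * (Y j * prod_list (map E L) :: ('n, 'k) S)"
      by (simp add: E_def algebra_simps mult.assoc)
    with Cons show ?case by (simp add: lookup_minus zero lookup_X_mult)
  qed simp
  then show ?thesis by (simp add: E_all_def)
qed

lemma E_all_neq_0: "(E_all :: ('n::finite, 'k::comm_ring_1) S) \<noteq> 0"
  using lookup_E_all_zero[where 'n = 'n and 'k = 'k] by force

text \<open>Every monomial other than \<open>1\<close> begins with some \<open>x\<^sub>k\<close> or ends with some \<open>y\<^sub>k\<close>, and
  \<open>E_all x\<^sub>k = 0 = y\<^sub>k E_all\<close>.\<close>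
lemma E_all_mult_single_mult_E_all:
  "E_all * Poly_Mapping.single m c * E_all
     = (if m = 0 then Poly_Mapping.single 0 c * E_all else (0 :: ('n::finite, 'k::comm_ring_1) S))"
proof (cases "m = 0")
  case True
  then show ?thesis by (simp add: single_zero_mult_commute[symmetric] E_all_idem mult.assoc)
next
  case False
  then have "nf m \<noteq> (\<lambda>_. (0, 0))" by (simp add: nf_inject[symmetric] nf_zero[symmetric])
  then obtain k where k: "nf m k \<noteq> (0, 0)" by auto
  show ?thesis
  proof (cases "0 < fst (nf m k)")
    case True
    then have "letter (k, True) + mon ((nf m)(k := (fst (nf m k) - 1, snd (nf m k)))) = m"
      by (subst letter_x_plus_eq_mon_iff[where v = "nf m", simplified]) simp
    then have "Poly_Mapping.single m c
        = X k * Poly_Mapping.single (mon ((nf m)(k := (fst (nf m k) - 1, snd (nf m k))))) (c :: 'k)"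
      by (simp add: X_def mult_single)
    with False show ?thesis by (simp add: E_all_mult_X flip: mult.assoc)
  next
    case no_x: False
    then have "0 < snd (nf m k)" using k by (cases "nf m k") auto
    then have "mon ((nf m)(k := (fst (nf m k), snd (nf m k) - 1))) + letter (k, False) = m"
      by (subst plus_letter_y_eq_mon_iff[where v = "nf m", simplified]) simp
    then have "Poly_Mapping.single m c
        = Poly_Mapping.single (mon ((nf m)(k := (fst (nf m k), snd (nf m k) - 1)))) (c :: 'k) * Y k"
      by (simp add: Y_def mult_single)
    with False show ?thesis by (simp add: Y_mult_E_all mult.assoc)
  qed
qed

lemma E_all_sandwich:
  "E_all * f * E_all = Poly_Mapping.single 0 (Poly_Mapping.lookup f 0) * (E_all :: ('n::finite, 'k::comm_ring_1) S)"
  by (induction f rule: poly_mapping_induct)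
     (simp_all add: E_all_mult_single_mult_E_all lookup_single when_def distrib_left distrib_right
       lookup_add single_add)

lemma lookup_single_mult_mult_single_zero:
  fixes f :: "('n::finite, 'k::comm_ring_1) S"
  shows "Poly_Mapping.lookup (Poly_Mapping.single u 1 * f * Poly_Mapping.single w 1) 0
     = (\<Sum>m. Poly_Mapping.lookup f m when u + m + w = 0)"
proof (induction f rule: poly_mapping_induct)
  case (single m c)
  show ?case
    by (subst Sum_any_eq_single[of m]) (auto simp: mult_single lookup_single when_def)
next
  case (add f g)
  have "finite {m. (Poly_Mapping.lookup h m when u + m + w = 0) \<noteq> 0}" for h :: "('n, 'k) S"
    by (rule finite_subset[of _ "Poly_Mapping.keys h"]) (auto simp: in_keys_iff)
  with add show ?case
    by (simp add: distrib_left distrib_right lookup_add when_add_distrib Sum_any.distrib)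
qed simp

text \<open>Take a monomial \<open>x\<^sup>a y\<^sup>b\<close> (componentwise) of minimal \<open>x\<close>-degree in the support of
  \<open>f\<close>; then \<open>y\<^sup>a f x\<^sup>b\<close> has the coefficient of \<open>x\<^sup>a y\<^sup>b\<close> in \<open>f\<close> as constant term,
  because \<open>y\<^sup>a x\<^sup>c y\<^sup>d x\<^sup>b = 1\<close> forces \<open>c \<le> a\<close>, with equality only for \<open>x\<^sup>a y\<^sup>b\<close>.\<close>
lemma sandwich_constant_term:
  fixes f :: "('n::finite, 'k::comm_ring_1) S"
  assumes "f \<noteq> 0"
  obtains u w where "Poly_Mapping.lookup (Poly_Mapping.single u 1 * f * Poly_Mapping.single w 1) 0 \<noteq> 0"
proof -
  define deg where "deg m = (\<Sum>k\<in>UNIV. fst (nf m k))" for m :: "'n smon"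
  obtain m1 where "m1 \<in> Poly_Mapping.keys f" using assms by (metis keys_eq_empty ex_in_conv)
  then obtain m0 where m0: "m0 \<in> Poly_Mapping.keys f"
    and min: "\<And>m. m \<in> Poly_Mapping.keys f \<Longrightarrow> deg m0 \<le> deg m"
    using ex_has_least_nat[of "\<lambda>m. m \<in> Poly_Mapping.keys f" m1 deg] by blast
  define u where "u = mon (\<lambda>k. (0, fst (nf m0 k)))"
  define w where "w = mon (\<lambda>k. (snd (nf m0 k), 0))"
  have one_iff: "u + m + w = 0 \<longleftrightarrow> (\<forall>k. fst (nf m k) \<le> fst (nf m0 k)
      \<and> fst (nf m0 k) - fst (nf m k) + snd (nf m k) = snd (nf m0 k))" for m
  proof -
    have "bicyclic_mult (bicyclic_mult (0, a) v) (b, 0) = (0, 0) \<longleftrightarrow> fst v \<le> a \<and> a - fst v + snd v = b"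
      for a b v by (cases v) (auto simp: bicyclic_mult_def)
    then show ?thesis by (simp add: nf_inject[symmetric] nf_plus nf_zero u_def w_def fun_eq_iff)
  qed
  have "m = m0" if "m \<in> Poly_Mapping.keys f" "u + m + w = 0" for m
  proof (rule ccontr)
    assume "m \<noteq> m0"
    then have "nf m \<noteq> nf m0" by (simp add: nf_inject)
    then obtain k where k: "nf m k \<noteq> nf m0 k" by auto
    have le: "\<forall>k. fst (nf m k) \<le> fst (nf m0 k)"
      and eq: "\<forall>k. fst (nf m0 k) - fst (nf m k) + snd (nf m k) = snd (nf m0 k)"
      using that(2) one_iff by auto
    have "fst (nf m k) \<noteq> fst (nf m0 k)"
      using k eq[rule_format, of k] by (auto simp: prod_eq_iff)
    with le have "deg m < deg m0"
      unfolding deg_def by (intro sum_strict_mono_ex1) (auto intro: order_le_neq_trans)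
    with min[OF that(1)] show False by simp
  qed
  then have "(\<Sum>m. Poly_Mapping.lookup f m when u + m + w = 0) = Poly_Mapping.lookup f m0"
    by (subst Sum_any_eq_single[of m0]) (auto simp: when_def in_keys_iff one_iff)
  with m0 show ?thesis
    by (intro that[of u w]) (simp add: lookup_single_mult_mult_single_zero in_keys_iff)
qed

lemma inj_if_E_all_not_in_kernel:
  fixes g :: "('n::finite, 'k::field) S \<Rightarrow> ('n, 'k) S"
  assumes ag: "alg_endo g" and "g E_all \<noteq> 0"
  shows "inj g"
proof -
  have ker: "f = 0" if gf: "g f = 0" for f
  proof (rule ccontr)
    assume "f \<noteq> 0"
    then obtain u w
      where c: "Poly_Mapping.lookup (Poly_Mapping.single u 1 * f * Poly_Mapping.single w 1) 0 \<noteq> 0"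
      by (rule sandwich_constant_term)
    let ?c = "Poly_Mapping.lookup (Poly_Mapping.single u 1 * f * Poly_Mapping.single w 1) 0"
    have "g (E_all * (Poly_Mapping.single u 1 * f * Poly_Mapping.single w 1) * E_all) = 0"
      by (simp add: alg_endo_mult[OF ag] gf)
    then have "Poly_Mapping.single 0 ?c * g E_all = 0"
      by (simp add: E_all_sandwich sscal_eq_mult[symmetric] alg_endo_sscal[OF ag])
    then have "Poly_Mapping.single 0 (inverse ?c) * Poly_Mapping.single 0 ?c * g E_all = 0"
      by (simp add: mult.assoc)
    with c assms(2) show False by (simp add: mult_single)
  qed
  show ?thesis
  proof (rule injI)
    fix a b assume "g a = g b"
    then have "g (a - b) = 0" by (simp add: alg_endo_diff[OF ag])
    then have "a - b = 0" by (rule ker)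
    then show "a = b" by simp
  qed
qed

lemma sigma_E_all_neq_0:
  fixes g :: "('n::finite, 'k::comm_ring_1) S \<Rightarrow> ('n, 'k) S"
  assumes ag: "alg_endo g" and sg: "is_sigma p g"
  shows "g E_all \<noteq> 0"
proof -
  have "E_all * g (E i) = E_all" for i
    using sg by (simp add: is_sigma_iff E_def alg_endo_diff[OF ag] alg_endo_mult[OF ag]
        alg_endo_one[OF ag] right_diff_distrib E_all_mult_X flip: mult.assoc)
  then have "E_all * prod_list (map (\<lambda>i. g (E i)) L) = E_all" for L
    by (induction L) (simp_all flip: mult.assoc)
  moreover have "g E_all = prod_list (map (\<lambda>i. g (E i)) idx_list)"
    by (simp add: E_all_def alg_endo_prod_list[OF ag] comp_def)
  ultimately have "E_all * g E_all = E_all" by simp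
  then show ?thesis using E_all_neq_0 by force
qed


section \<open>Leading monomials\<close>

context
  fixes f g :: "'a::{ordered_cancel_comm_monoid_add, linorder} \<Rightarrow>\<^sub>0 'b::semiring_0"
  assumes f: "f \<noteq> 0" and g: "g \<noteq> 0"
begin

lemma add_less_Max_keys:
  assumes "l \<in> Poly_Mapping.keys f" "q \<in> Poly_Mapping.keys g"
    and "l \<noteq> Max (Poly_Mapping.keys f) \<or> q \<noteq> Max (Poly_Mapping.keys g)"
  shows "l + q < Max (Poly_Mapping.keys f) + Max (Poly_Mapping.keys g)"
proof -
  have "l \<le> Max (Poly_Mapping.keys f)" "q \<le> Max (Poly_Mapping.keys g)"
    using assms(1,2) by simp_all
  with assms(3) show ?thesis
    by (metis add_le_less_mono add_less_le_mono order.not_eq_order_implies_strict)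
qed

lemma lookup_mult_above_Max_keys:
  assumes "Max (Poly_Mapping.keys f) + Max (Poly_Mapping.keys g) \<le> k"
  shows "Poly_Mapping.lookup (f * g) k
    = (Poly_Mapping.lookup f (Max (Poly_Mapping.keys f)) * Poly_Mapping.lookup g (Max (Poly_Mapping.keys g))
         when k = Max (Poly_Mapping.keys f) + Max (Poly_Mapping.keys g))"
proof -
  let ?Mf = "Max (Poly_Mapping.keys f)" and ?Mg = "Max (Poly_Mapping.keys g)"
  have inner: "(\<Sum>q. Poly_Mapping.lookup g q when k = l + q) = (Poly_Mapping.lookup g ?Mg when k = l + ?Mg)"
    if "l \<in> Poly_Mapping.keys f" for l
  proof (rule Sum_any_eq_single)
    fix q assume "q \<noteq> ?Mg"
    then show "(Poly_Mapping.lookup g q when k = l + q) = 0"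
      using add_less_Max_keys[OF that, of q] assms by (cases "q \<in> Poly_Mapping.keys g") (auto simp: in_keys_iff)
  qed
  have "Poly_Mapping.lookup (f * g) k = Poly_Mapping.lookup f ?Mf * (\<Sum>q. Poly_Mapping.lookup g q when k = ?Mf + q)"
    unfolding lookup_mult
  proof (rule Sum_any_eq_single)
    fix l assume "l \<noteq> ?Mf"
    then show "Poly_Mapping.lookup f l * (\<Sum>q. Poly_Mapping.lookup g q when k = l + q) = 0"
      using add_less_Max_keys[of l ?Mg] assms inner[of l] Max_in[of "Poly_Mapping.keys g"] g
      by (cases "l \<in> Poly_Mapping.keys f") (auto simp: in_keys_iff when_def)
  qed
  also have "\<dots> = (Poly_Mapping.lookup f ?Mf * Poly_Mapping.lookup g ?Mg when k = ?Mf + ?Mg)"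
    using f by (simp add: inner mult_when)
  finally show ?thesis .
qed

end

lemma Max_keys_mult:
  fixes f g :: "'a::{ordered_cancel_comm_monoid_add, linorder} \<Rightarrow>\<^sub>0 'b::semiring_no_zero_divisors"
  assumes f: "f \<noteq> 0" and g: "g \<noteq> 0"
  shows "Max (Poly_Mapping.keys (f * g)) = Max (Poly_Mapping.keys f) + Max (Poly_Mapping.keys g)"
proof (rule Max_eqI)
  let ?M = "Max (Poly_Mapping.keys f) + Max (Poly_Mapping.keys g)"
  have "Max (Poly_Mapping.keys f) \<in> Poly_Mapping.keys f" "Max (Poly_Mapping.keys g) \<in> Poly_Mapping.keys g"
    using f g by (simp_all add: Max_in)
  then show "?M \<in> Poly_Mapping.keys (f * g)"
    by (simp add: in_keys_iff lookup_mult_above_Max_keys[OF f g])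
  show "k \<le> ?M" if "k \<in> Poly_Mapping.keys (f * g)" for k
  proof (rule ccontr)
    assume "\<not> k \<le> ?M"
    then have "Poly_Mapping.lookup (f * g) k = 0"
      by (simp add: lookup_mult_above_Max_keys[OF f g])
    with that show False by (simp add: in_keys_iff)
  qed
qed simp

lemma zero_le_poly_mapping_nat: "(0 :: 'a::wellorder \<Rightarrow>\<^sub>0 nat) \<le> a"
proof (cases "a = 0")
  case False
  then obtain k where "Poly_Mapping.lookup a k \<noteq> 0" by (auto simp: poly_mapping_eq_iff fun_eq_iff)
  then have "Poly_Mapping.lookup a (LEAST k. Poly_Mapping.lookup a k \<noteq> 0) \<noteq> 0"
    by (rule LeastI)
  moreover have "\<forall>k < (LEAST k. Poly_Mapping.lookup a k \<noteq> 0). Poly_Mapping.lookup a k = 0"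
    using not_less_Least by blast
  ultimately have "less_fun (Poly_Mapping.lookup 0) (Poly_Mapping.lookup a)"
    unfolding less_fun_def by (intro exI[of _ "LEAST k. Poly_Mapping.lookup a k \<noteq> 0"]) simp
  then show ?thesis by (simp add: less_eq_poly_mapping.rep_eq)
qed simp

lemma zero_less_single: "(0 :: 'a::wellorder \<Rightarrow>\<^sub>0 nat) < Poly_Mapping.single j 1"
proof -
  have "less_fun (Poly_Mapping.lookup 0) (Poly_Mapping.lookup (Poly_Mapping.single j (1 :: nat)))"
    unfolding less_fun_def by (intro exI[of _ j]) (auto simp: lookup_single when_def)
  then show ?thesis by (simp add: less_poly_mapping.rep_eq)
qed

text \<open>Comparing leading monomials for the lexicographic order: the right-hand side has a
  leading monomial strictly above those of \<open>p\<close> and \<open>q\<close>.\<close>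
lemma eq_0_if_add_eq_mult_var_nat:
  fixes p q :: "('a::wellorder \<Rightarrow>\<^sub>0 nat) \<Rightarrow>\<^sub>0 'k::idom"
  assumes eq: "p + q = q * var j * p"
  shows "p = 0"
proof (rule ccontr)
  assume p: "p \<noteq> 0"
  then have q: "q \<noteq> 0" using eq by auto
  let ?Mp = "Max (Poly_Mapping.keys p)" and ?Mq = "Max (Poly_Mapping.keys q)"
  have var: "var j \<noteq> (0 :: ('a \<Rightarrow>\<^sub>0 nat) \<Rightarrow>\<^sub>0 'k)"
  proof
    assume "var j = (0 :: ('a \<Rightarrow>\<^sub>0 nat) \<Rightarrow>\<^sub>0 'k)"
    then have "Poly_Mapping.lookup (var j :: ('a \<Rightarrow>\<^sub>0 nat) \<Rightarrow>\<^sub>0 'k) (Poly_Mapping.single j 1) = 0" by simp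
    then show False by simp
  qed
  have M: "Max (Poly_Mapping.keys (q * var j * p)) = ?Mq + Poly_Mapping.single j 1 + ?Mp"
    using p q var by (simp add: Max_keys_mult)
  have "0 < ?Mq + Poly_Mapping.single j 1"
    using add_le_less_mono[OF zero_le_poly_mapping_nat zero_less_single] by simp
  then have "0 + ?Mp < ?Mq + Poly_Mapping.single j 1 + ?Mp" by (rule add_strict_right_mono)
  then have "?Mp < ?Mq + Poly_Mapping.single j 1 + ?Mp" by simp
  moreover have "?Mq < ?Mq + Poly_Mapping.single j 1 + ?Mp"
  proof -
    have "?Mq + 0 < ?Mq + Poly_Mapping.single j 1" by (rule add_strict_left_mono[OF zero_less_single])
    also have "\<dots> + 0 \<le> ?Mq + Poly_Mapping.single j 1 + ?Mp" by (rule add_left_mono[OF zero_le_poly_mapping_nat])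
    finally show ?thesis by simp
  qed
  moreover have "Max (Poly_Mapping.keys (q * var j * p)) \<le> ?Mp \<or> Max (Poly_Mapping.keys (q * var j * p)) \<le> ?Mq"
  proof -
    have "q * var j * p \<noteq> 0" using p q var by simp
    then have "Max (Poly_Mapping.keys (q * var j * p)) \<in> Poly_Mapping.keys (p + q)"
      by (simp add: Max_in eq)
    then show ?thesis using keys_add[of p q] by (auto intro: Max_ge)
  qed
  ultimately show False
    unfolding M by (auto dest: leD)
qed

lemma inj_map_monomials:
  assumes "inj h" shows "inj (map_monomials h)"
proof (rule injI)
  fix p q assume "map_monomials h p = map_monomials h q"
  then have "Poly_Mapping.lookup (map_monomials h p) (h a) = Poly_Mapping.lookup (map_monomials h q) (h a)" for a
    by simp
  with assms show "p = q" by (simp add: poly_mapping_eqI)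
qed

text \<open>Renaming the variables into \<open>nat\<close> makes the monomials linearly ordered, so that the
  previous lemma applies.\<close>
lemma eq_0_if_add_eq_mult_var:
  fixes p q :: "('n::finite, 'k::field) P"
  assumes eq: "p + q - q * var i * p = 0"
  shows "p = 0"
proof -
  obtain \<iota> :: "'n \<Rightarrow> nat" where \<iota>: "inj \<iota>"
    using finite_imp_inj_to_nat_seg[of "UNIV :: 'n set"] by auto
  let ?r = "map_monomials (map_monomials \<iota>) :: ('n, 'k) P \<Rightarrow> _"
  have inj: "inj (map_monomials \<iota> :: ('n \<Rightarrow>\<^sub>0 nat) \<Rightarrow> _)" by (rule inj_map_monomials[OF \<iota>])
  have hom: "map_monomials \<iota> (\<alpha> + \<beta>) = map_monomials \<iota> \<alpha> + map_monomials \<iota> (\<beta> :: 'n \<Rightarrow>\<^sub>0 nat)" for \<alpha> \<beta>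
    by (rule map_monomials_add[OF \<iota>])
  have "?r (var i) = var (\<iota> i)"
    by (simp only: map_monomials_single[OF inj] map_monomials_single[OF \<iota>])
  moreover have "?r (p + q - q * var i * p) = 0" using eq by simp
  ultimately have "?r p + ?r q = ?r q * var (\<iota> i) * ?r p"
    by (simp add: map_monomials_diff[OF inj] map_monomials_add[OF inj] map_monomials_mult[OF inj hom])
  then have "?r p = 0" by (rule eq_0_if_add_eq_mult_var_nat)
  then show ?thesis
    using injD[OF inj_map_monomials[OF inj], of p 0] by simp
qed


section \<open>Non-surjectivity\<close>

lemma st_bij_imp_id:
  fixes g :: "('n::finite, 'k::field) S \<Rightarrow> ('n, 'k) S"
  assumes g: "g \<in> st" and bij: "bij g"
  shows "g = id"
proof -
  obtain p where sg: "is_sigma p g" using g by (rule st_imp_is_sigma)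
  have ag: "alg_endo g" and gX: "\<And>i. g (X i) = X i" using g by (auto simp: st_def)
  have "inv g (X i) = X i" for i
    using inv_f_f[OF bij_is_inj[OF bij], of "X i"] by (simp add: gX)
  then have "inv g \<in> st" by (simp add: st_def alg_endo_inv[OF ag bij])
  then obtain q where sh: "is_sigma q (inv g)" by (rule st_imp_is_sigma)
  have "p i = 0" for i
  proof -
    have "Y i = sigma_Y (\<lambda>i. p i + q i - q i * var i * p i) i"
      using sigma_comp_Y[OF ag sg sh, of i] by (simp add: surj_f_inv_f[OF bij_is_surj[OF bij]])
    then have "emb (p i + q i - q i * var i * p i) * E i = 0"
      by (simp add: sigma_Y_def)
    then have "p i + q i - q i * var i * p i = 0" by (rule emb_mult_E_eq_0)
    then show ?thesis by (rule eq_0_if_add_eq_mult_var)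
  qed
  then have "g (Y i) = Y i" for i
    using sg by (simp add: is_sigma_iff sigma_Y_def)
  with ag gX show ?thesis by (intro alg_endo_eqI[OF ag alg_endo_id]) simp_all
qed

theorem corollary10p1:
  fixes K_witness :: "'k::field_char_0" and n_witness :: "'n::finite"
  shows "(id \<in> (st :: (('n, 'k) S \<Rightarrow> ('n, 'k) S) set))
    \<and> (\<forall>g\<in>(st :: (('n, 'k) S \<Rightarrow> ('n, 'k) S) set). \<forall>h\<in>st. g \<circ> h \<in> st \<and> g \<circ> h = h \<circ> g)
    \<and> (\<forall>g\<in>(st :: (('n, 'k) S \<Rightarrow> ('n, 'k) S) set). g \<noteq> id \<longrightarrow> inj g \<and> \<not> bij g)
    \<and> (\<forall>p :: 'n \<Rightarrow> ('n, 'k) P. st_cond p \<longrightarrow> (\<exists>!g. alg_endo g \<and> is_sigma p g))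
    \<and> (st :: (('n, 'k) S \<Rightarrow> ('n, 'k) S) set) = {g. alg_endo g \<and> (\<exists>p. st_cond p \<and> is_sigma p g)}"
proof (intro conjI ballI impI allI)
  show "id \<in> (st :: (('n, 'k) S \<Rightarrow> ('n, 'k) S) set)"
    by (simp add: st_def alg_endo_id)
next
  fix g h :: "('n, 'k) S \<Rightarrow> ('n, 'k) S"
  assume "g \<in> st" "h \<in> st"
  then show "g \<circ> h \<in> st" "g \<circ> h = h \<circ> g"
    by (rule st_comp, rule st_comp_commute)
next
  fix g :: "('n, 'k) S \<Rightarrow> ('n, 'k) S"
  assume g: "g \<in> st" and "g \<noteq> id"
  then show "\<not> bij g" using st_bij_imp_id by blast
  obtain p where "is_sigma p g" using g by (rule st_imp_is_sigma)
  moreover have "alg_endo g" using g by (simp add: st_def)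
  ultimately show "inj g" by (intro inj_if_E_all_not_in_kernel sigma_E_all_neq_0)
next
  show "st = {g. alg_endo g \<and> (\<exists>p. st_cond p \<and> is_sigma p g)}" by (rule st_eq_sigmas)
qed (rule ex1_sigma)

end
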